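(* Let $k$ be an algebraically closed field of characteristic $p>0$, $A=k[X,Y]$, and $F=(X^p+Y^{p+1})Y$. Then $k(F,Y)=k(X^p,Y)$, so $F$ is a good pseudo field generator in $A$; $F$ is a generally rational polynomial in $A$; and $F$ is not a field generator in $A$.
   Context: $F$ is a good pseudo field generator in $A$ if there is $G\in A$ with $\operatorname{Frac}A$ purely inseparable over $k(F,G)$. $F$ is a generally rational polynomial in $A$ if, for all but finitely many $\lambda\in k$, $F-\lambda$ is irreducible and $\operatorname{Frac}(A/(F-\lambda))$ is purely transcendental of transcendence degree $1$ over $k$. $F$ is a field generator in $A$ if $k(F,G)=\operatorname{Frac}A$ for some $G\in\operatorname{Frac}A$. *)

theory Defs
  imports "HOL-Computational_Algebra.Computational_Algebra"
begin

text \<open>The polynomial ring A = k[X,Y] is modelled as ('a poly) poly: the outer variable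
is Y, the coefficients are polynomials in X.  Frac A is ('a poly poly) fract.\<close>

definition polyX :: "'a::field poly poly" where
  "polyX = [:[:0, 1:]:]"

definition polyY :: "'a::field poly poly" where
  "polyY = [:0, 1:]"

definition polyC :: "'a::field \<Rightarrow> 'a poly poly" where
  "polyC c = [:[:c:]:]"

definition is_subfield :: "'b::field set \<Rightarrow> bool" where
  "is_subfield L \<longleftrightarrow> 0 \<in> L \<and> 1 \<in> L \<and>
     (\<forall>x\<in>L. \<forall>y\<in>L. x + y \<in> L \<and> x - y \<in> L \<and> x * y \<in> L) \<and>
     (\<forall>x\<in>L. inverse x \<in> L)"

definition gen_field :: "('a \<Rightarrow> 'b::field) \<Rightarrow> 'b set \<Rightarrow> 'b set" where
  "gen_field emb S = \<Inter>{L. is_subfield L \<and> range emb \<subseteq> L \<and> S \<subseteq> L}"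

definition kFrac :: "'a::field poly poly fract set \<Rightarrow> 'a poly poly fract set" where
  "kFrac S = gen_field (\<lambda>c. to_fract (polyC c)) S"

definition purely_insep_over :: "nat \<Rightarrow> 'a::field poly poly fract set \<Rightarrow> bool" where
  "purely_insep_over p L \<longleftrightarrow> (\<forall>h. \<exists>n. h ^ (p ^ n) \<in> L)"

definition good_pseudo_field_generator :: "nat \<Rightarrow> 'a::field poly poly \<Rightarrow> bool" where
  "good_pseudo_field_generator p F \<longleftrightarrow>
     (\<exists>G::'a poly poly. purely_insep_over p (kFrac {to_fract F, to_fract G}))"

definition field_generator :: "'a::field poly poly \<Rightarrow> bool" where
  "field_generator F \<longleftrightarrow>
     (\<exists>G::'a poly poly fract. kFrac {to_fract F, G} = UNIV)"

text \<open>Evaluation of P in k[X,Y] at (X,Y) := (u,v) in the rational function field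
k(t) = ('a poly) fract; this is the k-algebra homomorphism k[X,Y] -> k(t) determined by u, v.\<close>
definition eval_kt :: "'a::field poly poly \<Rightarrow> 'a poly fract \<Rightarrow> 'a poly fract \<Rightarrow> 'a poly fract" where
  "eval_kt P u v =
     poly (map_poly (\<lambda>c. poly (map_poly (\<lambda>a. to_fract [:a:]) c) u) P) v"

text \<open>Frac(A/(Q)) is k-isomorphic to k(t), i.e. purely transcendental of transcendence
degree 1 over k: equivalently there is a k-algebra map A -> k(t) with kernel exactly (Q)
whose image generates k(t) as a field over k.\<close>
definition rational_quotient :: "'a::field poly poly \<Rightarrow> bool" where
  "rational_quotient Q \<longleftrightarrow>
     (\<exists>u v :: 'a poly fract.
        (\<forall>P. eval_kt P u v = 0 \<longleftrightarrow> Q dvd P) \<and>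
        gen_field (\<lambda>c. to_fract [:c:]) {u, v} = UNIV)"

definition generally_rational :: "'a::field poly poly \<Rightarrow> bool" where
  "generally_rational F \<longleftrightarrow>
     finite {c::'a. \<not> (irreducible (F - polyC c) \<and> rational_quotient (F - polyC c))}"

end

theory Submission
  imports Defs
begin

(*
  Since X^p = F/Y - Y^(p+1), k(F, Y) = k(X^p, Y), which contains all p-th powers of Frac A;
  so F is a good pseudo field generator.

  For c = gamma^p <> 0 the fibre F = c is parametrised by X = gamma/t - t^(p+1), Y = t^p.
  The kernel of this parametrisation k[X,Y] -> k(t) is generated by F - c, which is monic of
  degree p + 2 in Y: a polynomial of lower Y-degree in the kernel vanishes at p + 2 distinct
  points on almost every line X = u. Moreover t and -gamma/t^(p+1) are the roots of
  Y Z^2 + X Z = gamma and t^p = Y, so t lies in k(X, Y). Hence every such fibre is irreducible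
  and rational.

  If k(F, G) = k(X, Y), then F and G are algebraically independent, because the derivation
  d/dX kills F but not G (descent on a minimal relation, which must be a p-th power). Writing
  X and Y as rational functions of F and G and specialising G to a generic constant yields
  x, y in k(s) with (x^p + y^(p+1)) y = s. This is impossible: with y = f/g in lowest terms,
  x^p has derivative 0, which forces s g^(p+2) + f^(p+2) to divide f.
*)

lemma CHAR_fract [simp]: "CHAR('a::idom fract) = CHAR('a)"
proof (rule CHAR_eqI)
  have "of_nat n = (0::'a fract) \<longleftrightarrow> of_nat n = (0::'a)" for n
    by (simp add: of_nat_fract Zero_fract_def eq_fract)
  then show "of_nat CHAR('a) = (0::'a fract)" "\<And>n. of_nat n = (0::'a fract) \<Longrightarrow> CHAR('a) dvd n"
    by (simp_all add: of_nat_eq_0_iff_char_dvd)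
qed

lemma freshmans_dream_diff:
  fixes x y :: "'b::comm_ring_1"
  assumes "prime CHAR('b)"
  shows "(x - y) ^ CHAR('b) = x ^ CHAR('b) - y ^ CHAR('b)"
  using freshmans_dream[OF assms refl, of "x - y" y] by simp

lemma frobenius_inj:
  fixes x y :: "'b::idom"
  assumes "prime CHAR('b)" and "x ^ CHAR('b) = y ^ CHAR('b)"
  shows "x = y"
  using freshmans_dream_diff[OF assms(1), of x y] assms by simp

definition is_ring_hom :: "('b::comm_ring_1 \<Rightarrow> 'c::comm_ring_1) \<Rightarrow> bool" where
  "is_ring_hom h \<longleftrightarrow> h 1 = 1 \<and> (\<forall>a b. h (a + b) = h a + h b) \<and> (\<forall>a b. h (a * b) = h a * h b)"

lemma
  assumes "is_ring_hom h"
  shows ring_hom_1: "h 1 = 1"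
    and ring_hom_add: "h (a + b) = h a + h b"
    and ring_hom_mult: "h (a * b) = h a * h b"
    and ring_hom_0: "h 0 = 0"
    and ring_hom_uminus: "h (- a) = - h a"
    and ring_hom_diff: "h (a - b) = h a - h b"
    and ring_hom_power: "h (a ^ n) = h a ^ n"
proof -
  show add: "h (a + b) = h a + h b" for a b using assms by (simp add: is_ring_hom_def)
  show one: "h 1 = 1" and mult: "h (a * b) = h a * h b" for a b
    using assms by (simp_all add: is_ring_hom_def)
  show zero: "h 0 = 0" using add[of 0 0] by simp
  show uminus: "h (- a) = - h a" for a using add[of "- a" a] zero by (simp add: eq_neg_iff_add_eq_0)
  show "h (a - b) = h a - h b" using add[of a "- b"] uminus[of b] by simp
  show "h (a ^ n) = h a ^ n" by (induction n) (simp_all add: one mult)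
qed

lemmas ring_hom_simps = ring_hom_0 ring_hom_1 ring_hom_add ring_hom_mult ring_hom_uminus
  ring_hom_diff ring_hom_power

lemma is_ring_hom_to_fract: "is_ring_hom to_fract"
  by (simp add: is_ring_hom_def)

lemma to_fract_power: "to_fract (x ^ n) = to_fract x ^ n"
  by (rule ring_hom_power[OF is_ring_hom_to_fract])

lemma is_ring_hom_const_poly: "is_ring_hom (\<lambda>c. [:c:])"
  by (simp add: is_ring_hom_def one_pCons)

lemma is_ring_hom_id: "is_ring_hom (\<lambda>a. a)"
  by (simp add: is_ring_hom_def)

lemma is_ring_hom_comp: "is_ring_hom h \<Longrightarrow> is_ring_hom g \<Longrightarrow> is_ring_hom (\<lambda>x. g (h x))"
  by (simp add: is_ring_hom_def)

lemma is_ring_hom_to_fract_const: "is_ring_hom (\<lambda>a. to_fract [:a:])"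
  by (rule is_ring_hom_comp[OF is_ring_hom_const_poly is_ring_hom_to_fract])

lemma is_ring_hom_poly: "is_ring_hom (\<lambda>P. poly P x)"
  by (simp add: is_ring_hom_def)

lemma map_poly_add_ring_hom:
  "is_ring_hom h \<Longrightarrow> map_poly h (P + Q) = map_poly h P + map_poly h Q"
  by (intro poly_eqI) (simp add: coeff_map_poly ring_hom_simps)

lemma map_poly_mult_ring_hom:
  assumes h: "is_ring_hom h"
  shows "map_poly h (P * Q) = map_poly h P * map_poly h Q"
proof (induction P)
  case (pCons a P)
  then show ?case
    by (simp add: map_poly_add_ring_hom[OF h] map_poly_smult map_poly_pCons ring_hom_simps[OF h])
qed simp

lemma is_ring_hom_map_poly: "is_ring_hom h \<Longrightarrow> is_ring_hom (map_poly h)"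
  by (simp add: is_ring_hom_def[of "map_poly h"] ring_hom_1 map_poly_add_ring_hom
      map_poly_mult_ring_hom)

lemma is_ring_hom_poly_map_poly: "is_ring_hom h \<Longrightarrow> is_ring_hom (\<lambda>P. poly (map_poly h P) x)"
  using is_ring_hom_comp[OF is_ring_hom_map_poly is_ring_hom_poly] .

lemma ring_hom_poly_map_poly:
  assumes \<phi>: "is_ring_hom \<phi>" and h: "is_ring_hom h"
  shows "\<phi> (poly (map_poly h r) x) = poly (map_poly (\<lambda>c. \<phi> (h c)) r) (\<phi> x)"
proof (induction r)
  case (pCons c r)
  have "\<phi> (h 0) = 0" by (simp add: ring_hom_0[OF \<phi>] ring_hom_0[OF h])
  with pCons show ?case
    by (simp add: map_poly_pCons ring_hom_simps[OF \<phi>] ring_hom_0[OF h])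
qed (simp add: ring_hom_0[OF \<phi>])

definition eval2 :: "('a::comm_ring_1 \<Rightarrow> 'b::comm_ring_1) \<Rightarrow> 'a poly poly \<Rightarrow> 'b \<Rightarrow> 'b \<Rightarrow> 'b" where
  "eval2 \<kappa> P x y = poly (map_poly (\<lambda>c. poly (map_poly \<kappa> c) x) P) y"

lemma eval_kt_eq_eval2: "eval_kt P u v = eval2 (\<lambda>a. to_fract [:a:]) P u v"
  by (simp add: eval_kt_def eval2_def)

lemma is_ring_hom_eval2: "is_ring_hom \<kappa> \<Longrightarrow> is_ring_hom (\<lambda>P. eval2 \<kappa> P x y)"
  unfolding eval2_def by (intro is_ring_hom_poly_map_poly)

lemma eval2_const:
  "is_ring_hom \<kappa> \<Longrightarrow> eval2 \<kappa> [:r:] x y = poly (map_poly \<kappa> r) x"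
  by (simp add: eval2_def map_poly_pCons ring_hom_0 is_ring_hom_poly_map_poly)

lemma
  fixes \<kappa> :: "'a::field \<Rightarrow> 'b::comm_ring_1"
  assumes "is_ring_hom \<kappa>"
  shows eval2_polyC: "eval2 \<kappa> (polyC c) x y = \<kappa> c"
    and eval2_polyX: "eval2 \<kappa> polyX x y = x"
    and eval2_polyY: "eval2 \<kappa> polyY x y = y"
  using assms
  by (simp_all add: eval2_const polyC_def polyX_def polyY_def eval2_def map_poly_pCons
      ring_hom_simps is_ring_hom_poly_map_poly)

lemma is_ring_hom_polyC: "is_ring_hom (polyC :: 'a::field \<Rightarrow> _)"
  using is_ring_hom_comp[OF is_ring_hom_const_poly is_ring_hom_const_poly]
  by (simp add: polyC_def[abs_def])

lemma is_ring_hom_to_fract_polyC: "is_ring_hom (\<lambda>c. to_fract (polyC c :: 'a::field poly poly))"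
  by (rule is_ring_hom_comp[OF is_ring_hom_polyC is_ring_hom_to_fract])

lemma polyXY_induct [case_names C X Y add mult]:
  fixes P :: "'a::field poly poly \<Rightarrow> bool"
  assumes C: "\<And>c. P (polyC c)" and X: "P polyX" and Y: "P polyY"
    and add: "\<And>a b. P a \<Longrightarrow> P b \<Longrightarrow> P (a + b)"
    and mult: "\<And>a b. P a \<Longrightarrow> P b \<Longrightarrow> P (a * b)"
  shows "P a"
proof -
  have const: "P [:c:]" for c
  proof (induction c)
    case 0
    then show ?case using C[of 0] by (simp add: polyC_def)
  next
    case (pCons e c)
    have "[:pCons e c:] = polyC e + polyX * [:c:]"
      by (simp add: polyC_def polyX_def)
    with add mult C X pCons show ?case by metis
  qed
  show ?thesis
  proof (induction a)
    case 0
    then show ?case using const[of 0] by simp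
  next
    case (pCons c a)
    have "pCons c a = [:c:] + polyY * a" by (simp add: polyY_def)
    with add mult const Y pCons show ?case by metis
  qed
qed

lemma
  assumes "is_subfield L"
  shows subfield_0: "0 \<in> L" and subfield_1: "1 \<in> L"
    and subfield_add: "x \<in> L \<Longrightarrow> y \<in> L \<Longrightarrow> x + y \<in> L"
    and subfield_diff: "x \<in> L \<Longrightarrow> y \<in> L \<Longrightarrow> x - y \<in> L"
    and subfield_mult: "x \<in> L \<Longrightarrow> y \<in> L \<Longrightarrow> x * y \<in> L"
    and subfield_divide: "x \<in> L \<Longrightarrow> y \<in> L \<Longrightarrow> x / y \<in> L"
  using assms by (simp_all add: is_subfield_def divide_inverse)

lemma subfield_power: "is_subfield L \<Longrightarrow> x \<in> L \<Longrightarrow> x ^ n \<in> L"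
  by (induction n) (simp_all add: subfield_1 subfield_mult)

lemma gen_field_subfield: "is_subfield (gen_field emb S)"
  unfolding gen_field_def is_subfield_def by blast

lemma gen_field_emb: "emb c \<in> gen_field emb S"
  unfolding gen_field_def by blast

lemma gen_field_gen: "x \<in> S \<Longrightarrow> x \<in> gen_field emb S"
  unfolding gen_field_def by blast

lemma gen_field_least:
  "is_subfield L \<Longrightarrow> (\<And>c. emb c \<in> L) \<Longrightarrow> S \<subseteq> L \<Longrightarrow> gen_field emb S \<subseteq> L"
  unfolding gen_field_def by blast

lemma kFrac_subfield: "is_subfield (kFrac S)"
  unfolding kFrac_def by (rule gen_field_subfield)

lemma kFrac_const: "to_fract (polyC c) \<in> kFrac S"
  unfolding kFrac_def by (rule gen_field_emb)

lemma kFrac_gen: "x \<in> S \<Longrightarrow> x \<in> kFrac S"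
  unfolding kFrac_def by (rule gen_field_gen)

lemma kFrac_least:
  "is_subfield L \<Longrightarrow> (\<And>c. to_fract (polyC c) \<in> L) \<Longrightarrow> S \<subseteq> L \<Longrightarrow> kFrac S \<subseteq> L"
  unfolding kFrac_def by (rule gen_field_least)

section \<open>Derivations\<close>

definition is_derivation :: "('b::comm_ring_1 \<Rightarrow> 'b) \<Rightarrow> bool" where
  "is_derivation D \<longleftrightarrow> (\<forall>x y. D (x + y) = D x + D y) \<and> (\<forall>x y. D (x * y) = x * D y + y * D x)"

lemma
  assumes "is_derivation D"
  shows der_add: "D (x + y) = D x + D y"
    and der_mult: "D (x * y) = x * D y + y * D x"
    and der_0: "D 0 = 0"
    and der_1: "D 1 = 0"
    and der_diff: "D (x - y) = D x - D y"
proof -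
  show add: "D (x + y) = D x + D y" and "D (x * y) = x * D y + y * D x" for x y
    using assms by (simp_all add: is_derivation_def)
  then show zero: "D 0 = 0" and "D 1 = 0"
    using add[of 0 0] by (metis add_cancel_right_right mult_1 add.right_neutral)+
  have "D (x - y) + D y = D x" using add[of "x - y" y] by simp
  then show "D (x - y) = D x - D y" by (simp add: eq_diff_eq)
qed

lemma der_power: "is_derivation D \<Longrightarrow> D (x ^ n) = of_nat n * x ^ (n - 1) * D x"
proof (induction n)
  case (Suc n)
  then show ?case by (cases n) (simp_all add: der_mult der_1 algebra_simps)
qed (simp add: der_1)

lemma der_sum: "is_derivation D \<Longrightarrow> D (sum f A) = (\<Sum>i\<in>A. D (f i))"
  by (induction A rule: infinite_finite_induct) (simp_all add: der_0 der_add)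

lemma is_derivation_pderiv: "is_derivation (pderiv :: 'b::idom poly \<Rightarrow> _)"
  by (simp add: is_derivation_def pderiv_add pderiv_mult)

lemma degree_pderiv_less:
  assumes "pderiv p \<noteq> 0"
  shows "degree (pderiv p) < degree p"
proof -
  have "degree p \<noteq> 0"
  proof
    assume "degree p = 0"
    then obtain c where "p = [:c:]" by (elim degree_eq_zeroE)
    with assms show False by simp
  qed
  moreover have "degree (pderiv p) \<le> degree p - 1"
    by (rule degree_le) (auto simp: coeff_pderiv coeff_eq_0)
  ultimately show ?thesis by linarith
qed

text \<open>On \<open>k[X,Y]\<close>, \<^const>\<open>pderiv\<close> is \<open>\<partial>/\<partial>Y\<close> and \<open>map_poly pderiv\<close> is \<open>\<partial>/\<partial>X\<close>.\<close>

lemma is_derivation_map_poly_pderiv: "is_derivation (map_poly (pderiv :: 'b::idom poly \<Rightarrow> _))"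
  unfolding is_derivation_def
proof (intro conjI allI)
  fix x y :: "'b poly poly"
  show "map_poly pderiv (x + y) = map_poly pderiv x + map_poly pderiv y"
    by (intro poly_eqI) (simp add: coeff_map_poly pderiv_add)
  show "map_poly pderiv (x * y) = x * map_poly pderiv y + y * map_poly pderiv x"
  proof (rule poly_eqI)
    fix n
    have "coeff (map_poly pderiv (x * y)) n = (\<Sum>i\<le>n. pderiv (coeff x i * coeff y (n - i)))"
      by (simp add: coeff_map_poly coeff_mult der_sum[OF is_derivation_pderiv])
    also have "\<dots> = (\<Sum>i\<le>n. coeff x i * pderiv (coeff y (n - i)))
                    + (\<Sum>i\<le>n. pderiv (coeff x i) * coeff y (n - i))"
      by (simp add: pderiv_mult sum.distrib algebra_simps)
    also have "\<dots> = coeff (x * map_poly pderiv y) n + coeff (map_poly pderiv x * y) n"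
      by (simp add: coeff_mult coeff_map_poly)
    finally show "coeff (map_poly pderiv (x * y)) n
        = coeff (x * map_poly pderiv y + y * map_poly pderiv x) n"
      by (simp add: mult.commute)
  qed
qed

definition fract_der :: "('b::idom \<Rightarrow> 'b) \<Rightarrow> 'b fract \<Rightarrow> 'b fract" where
  "fract_der D h =
     (SOME z. \<forall>a b. b \<noteq> 0 \<longrightarrow> h = Fract a b \<longrightarrow> z = Fract (D a * b - a * D b) (b * b))"

lemma quotient_rule_well_defined:
  fixes D :: "'b::idom \<Rightarrow> 'b"
  assumes D: "is_derivation D" and b: "b \<noteq> 0" and b': "b' \<noteq> 0" and eq: "Fract a b = Fract a' b'"
  shows "Fract (D a * b - a * D b) (b * b) = Fract (D a' * b' - a' * D b') (b' * b')"
proof -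
  have h1: "a * b' = a' * b" using eq b b' by (simp add: eq_fract)
  have h2: "a * D b' + b' * D a = a' * D b + b * D a'"
    using arg_cong[OF h1, of D] by (simp add: der_mult[OF D])
  have "(D a * b - a * D b) * (b' * b') - (D a' * b' - a' * D b') * (b * b)
      = b * b' * (a * D b' + b' * D a - (a' * D b + b * D a'))
        + (a' * b - a * b') * (b * D b' + b' * D b)"
    by (simp add: algebra_simps)
  also have "\<dots> = 0" by (simp add: h1 h2)
  finally show ?thesis using b b' by (simp add: eq_fract)
qed

lemma fract_der_Fract:
  assumes D: "is_derivation D" and b: "b \<noteq> 0"
  shows "fract_der D (Fract a b) = Fract (D a * b - a * D b) (b * b)"
  unfolding fract_der_def
  by (rule some_equality) (use quotient_rule_well_defined[OF D b] b in blast)+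

lemma fract_der_to_fract: "is_derivation D \<Longrightarrow> fract_der D (to_fract a) = to_fract (D a)"
  unfolding to_fract_def by (simp add: fract_der_Fract der_1)

lemma is_derivation_fract_der:
  fixes D :: "'b::idom \<Rightarrow> 'b"
  assumes D: "is_derivation D"
  shows "is_derivation (fract_der D)"
  unfolding is_derivation_def
proof (intro conjI allI)
  fix x y :: "'b fract"
  obtain a b c d where x: "x = Fract a b" "b \<noteq> 0" and y: "y = Fract c d" "d \<noteq> 0"
    by (cases x, cases y) blast
  show "fract_der D (x + y) = fract_der D x + fract_der D y"
    using x y
      by (simp add: fract_der_Fract[OF D] der_add[OF D] der_mult[OF D] eq_fract algebra_simps)
  show "fract_der D (x * y) = x * fract_der D y + y * fract_der D x"
    using x y
      by (simp add: fract_der_Fract[OF D] der_add[OF D] der_mult[OF D] eq_fract algebra_simps)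
qed

lemma fract_der_inverse:
  assumes D: "is_derivation D" and "fract_der D x = 0"
  shows "fract_der D (inverse x) = 0"
proof (cases x)
  case (Fract a b)
  have "Fract (D a * b - a * D b) (b * b) = 0" using assms Fract
    by (simp add: fract_der_Fract[OF D])
  then have "D a * b - a * D b = 0" using Fract by (simp add: Zero_fract_def eq_fract)
  then show ?thesis using Fract
    by (cases "a = 0") (simp_all add: fract_der_Fract[OF D] Zero_fract_def eq_fract algebra_simps)
qed

lemma subfield_fract_der_kernel:
  assumes D: "is_derivation D"
  shows "is_subfield {h. fract_der D h = 0}"
  using der_0[OF is_derivation_fract_der[OF D]] der_1[OF is_derivation_fract_der[OF D]]
    der_add[OF is_derivation_fract_der[OF D]] der_diff[OF is_derivation_fract_der[OF D]]
    der_mult[OF is_derivation_fract_der[OF D]] fract_der_inverse[OF D]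
  by (auto simp: is_subfield_def)

lemma der_poly_map_poly:
  assumes d: "is_derivation \<delta>" and h: "is_ring_hom h"
  shows "\<delta> (poly (map_poly h r) x)
       = poly (map_poly (\<lambda>c. \<delta> (h c)) r) x + poly (map_poly h (pderiv r)) x * \<delta> x"
proof (induction r)
  case (pCons c r)
  have "\<delta> (h 0) = 0" using ring_hom_0[OF h] der_0[OF d] by simp
  with pCons show ?case
    by (simp add: map_poly_pCons ring_hom_0[OF h] der_add[OF d] der_mult[OF d] pderiv_pCons
        map_poly_add_ring_hom[OF h] algebra_simps)
qed (simp add: der_0[OF d])

lemma poly_map_poly_mult_right:
  "h 0 = 0 \<Longrightarrow> poly (map_poly (\<lambda>c. h c * k) R) x = poly (map_poly h R) x * k"
  by (induction R) (simp_all add: map_poly_pCons algebra_simps)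

lemma der_eval2:
  fixes \<kappa> :: "'a::idom \<Rightarrow> 'b::comm_ring_1"
  assumes d: "is_derivation \<delta>" and \<kappa>: "is_ring_hom \<kappa>" and const: "\<And>c. \<delta> (\<kappa> c) = 0"
  shows "\<delta> (eval2 \<kappa> P x y) = eval2 \<kappa> (map_poly pderiv P) x y * \<delta> x + eval2 \<kappa> (pderiv P) x y * \<delta> y"
proof -
  define h where "h c = poly (map_poly \<kappa> c) x" for c
  have h: "is_ring_hom h" unfolding h_def by (rule is_ring_hom_poly_map_poly[OF \<kappa>])
  have "map_poly (\<lambda>_. 0 :: 'b) c = 0" for c :: "'a poly"
    by (intro poly_eqI) (simp add: coeff_map_poly)
  then have inner: "\<delta> (h c) = h (pderiv c) * \<delta> x" for c
    using der_poly_map_poly[OF d \<kappa>, of c x] by (simp add: h_def const)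
  have "\<delta> (eval2 \<kappa> P x y)
      = poly (map_poly (\<lambda>c. h (pderiv c) * \<delta> x) P) y + eval2 \<kappa> (pderiv P) x y * \<delta> y"
    using der_poly_map_poly[OF d h, of P y] by (simp add: eval2_def h_def[symmetric] inner)
  also have "poly (map_poly (\<lambda>c. h (pderiv c) * \<delta> x) P) y = eval2 \<kappa> (map_poly pderiv P) x y * \<delta> x"
    by (subst poly_map_poly_mult_right)
       (simp_all add: ring_hom_0[OF h] eval2_def h_def[symmetric] map_poly_map_poly comp_def)
  finally show ?thesis .
qed

section \<open>\<open>F\<close> is a good pseudo field generator\<close>

lemma kFrac_F_Y_eq:
  fixes F :: "'a::field poly poly"
  assumes F: "F = (polyX ^ p + polyY ^ (p + 1)) * polyY"
  shows "kFrac {to_fract F, to_fract polyY} = kFrac {to_fract (polyX ^ p), to_fract polyY}"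
proof
  have Y: "to_fract (polyY :: 'a poly poly) \<noteq> 0" by (simp add: polyY_def)
  have "to_fract F = (to_fract (polyX ^ p) + to_fract polyY ^ (p + 1)) * to_fract polyY"
    by (simp add: F to_fract_power[of polyY])
  also have "\<dots> \<in> kFrac {to_fract (polyX ^ p), to_fract polyY}"
    by (intro subfield_mult subfield_add subfield_power kFrac_subfield kFrac_gen) auto
  finally show "kFrac {to_fract F, to_fract polyY} \<subseteq> kFrac {to_fract (polyX ^ p), to_fract polyY}"
    by (intro kFrac_least kFrac_subfield kFrac_const) (auto intro: kFrac_gen)
  have "to_fract (polyX ^ p) = to_fract F / to_fract polyY - to_fract polyY ^ (p + 1)"
    using Y by (simp add: F field_simps to_fract_power[of polyY])
  also have "\<dots> \<in> kFrac {to_fract F, to_fract polyY}"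
    by (intro subfield_diff subfield_divide subfield_power kFrac_subfield kFrac_gen) auto
  finally show "kFrac {to_fract (polyX ^ p), to_fract polyY} \<subseteq> kFrac {to_fract F, to_fract polyY}"
    by (intro kFrac_least kFrac_subfield kFrac_const) (auto intro: kFrac_gen)
qed

lemma pth_power_in_kFrac_Xp_Y:
  fixes h :: "'a::field poly poly fract"
  assumes "prime CHAR('a)"
  shows "h ^ CHAR('a) \<in> kFrac {to_fract (polyX ^ CHAR('a)), to_fract polyY}"
proof -
  define M where "M = kFrac {to_fract (polyX ^ CHAR('a)), to_fract (polyY :: 'a poly poly)}"
  have M: "is_subfield M" unfolding M_def by (rule kFrac_subfield)
  have poly: "to_fract a ^ CHAR('a) \<in> M" for a :: "'a poly poly"
  proof (induction a rule: polyXY_induct)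
    case (C c)
    show ?case unfolding M_def by (intro subfield_power kFrac_subfield kFrac_const)
  next
    case X
    show ?case unfolding M_def by (simp add: kFrac_gen flip: to_fract_power)
  next
    case Y
    show ?case unfolding M_def by (intro subfield_power kFrac_subfield kFrac_gen) auto
  next
    case (add a b)
    have "(to_fract a + to_fract b) ^ CHAR('a poly poly fract)
        = to_fract a ^ CHAR('a poly poly fract) + to_fract b ^ CHAR('a poly poly fract)"
      using assms by (intro freshmans_dream) simp_all
    with add show ?case by (simp add: subfield_add[OF M])
  next
    case (mult a b)
    then show ?case by (simp add: power_mult_distrib subfield_mult[OF M])
  qed
  obtain a b where "h = to_fract a / to_fract b"
    by (cases h) (simp add: Fract_conv_to_fract)
  then show ?thesis using poly M unfolding M_def by (simp add: power_divide subfield_divide)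
qed

lemma good_pseudo_field_generator_F:
  fixes F :: "'a::field poly poly"
  assumes p: "CHAR('a) = p" "p > 0" and F: "F = (polyX ^ p + polyY ^ (p + 1)) * polyY"
  shows "good_pseudo_field_generator p F"
proof -
  have "prime CHAR('a)" using prime_CHAR_semidom[where 'a='a] p by simp
  then have "h ^ (p ^ 1) \<in> kFrac {to_fract F, to_fract polyY}" for h
    using pth_power_in_kFrac_Xp_Y[of h] kFrac_F_Y_eq[OF F] p(1) by simp
  then show ?thesis unfolding good_pseudo_field_generator_def purely_insep_over_def by blast
qed

section \<open>\<open>p\<close>-th roots of polynomials\<close>

lemma coeff_eq_0_if_pderiv_eq_0:
  fixes r :: "'b::idom poly"
  assumes "pderiv r = 0" and "\<not> CHAR('b) dvd n"
  shows "coeff r n = 0"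
proof (cases n)
  case (Suc m)
  have "of_nat (Suc m) * coeff r (Suc m) = 0"
    using arg_cong[OF assms(1), of "\<lambda>q. coeff q m"] by (simp add: coeff_pderiv)
  moreover have "of_nat n \<noteq> (0::'b)" using assms(2) by (simp add: of_nat_eq_0_iff_char_dvd)
  ultimately show ?thesis using Suc by simp
qed (use assms(2) in simp)

lemma exists_pth_root_poly:
  fixes R :: "'b::comm_ring_1 poly"
  assumes p: "prime CHAR('b)"
    and sparse: "\<And>n. \<not> CHAR('b) dvd n \<Longrightarrow> coeff R n = 0"
    and roots: "\<And>n. \<exists>c. c ^ CHAR('b) = coeff R n"
  shows "\<exists>Q. Q ^ CHAR('b) = R"
proof -
  define q where "q = CHAR('b)"
  have q0: "q > 0" using p prime_gt_0_nat unfolding q_def by blast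
  obtain \<rho> where \<rho>: "\<And>n. \<rho> n ^ q = coeff R n" using roots unfolding q_def by metis
  define d where "d = degree R"
  have "(\<Sum>i\<le>d. monom (\<rho> (q * i)) i) ^ q = (\<Sum>i\<le>d. monom (\<rho> (q * i)) i ^ q)"
    using p by (intro freshmans_dream_sum) (simp_all add: q_def)
  also have "\<dots> = (\<Sum>n\<in>(\<lambda>i. q * i) ` {..d}. monom (coeff R n) n)"
    using q0 by (simp add: sum.reindex inj_on_def monom_power \<rho> mult.commute)
  also have "\<dots> = (\<Sum>n\<le>q * d. monom (coeff R n) n)"
  proof (rule sum.mono_neutral_left)
    show "(\<lambda>i. q * i) ` {..d} \<subseteq> {..q * d}" by auto
    show "\<forall>n\<in>{..q * d} - (\<lambda>i. q * i) ` {..d}. monom (coeff R n) n = 0"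
    proof
      fix n assume n: "n \<in> {..q * d} - (\<lambda>i. q * i) ` {..d}"
      have "\<not> q dvd n"
      proof
        assume "q dvd n"
        then obtain k where "n = q * k" ..
        with n q0 show False by auto
      qed
      then show "monom (coeff R n) n = 0" using sparse unfolding q_def by simp
    qed
  qed simp
  also have "\<dots> = R"
    using q0 by (intro poly_as_sum_of_monoms') (simp add: d_def)
  finally show ?thesis unfolding q_def by blast
qed

lemma exists_pth_root_if_pderiv_eq_0:
  fixes r :: "'a::alg_closed_field poly"
  assumes "CHAR('a) > 0" and "pderiv r = 0"
  shows "\<exists>q. q ^ CHAR('a) = r"
  using assms prime_CHAR_semidom nth_root_exists
  by (intro exists_pth_root_poly coeff_eq_0_if_pderiv_eq_0) (simp_all, blast)

lemma exists_pth_root_if_partial_derivs_eq_0: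
  fixes R :: "'a::alg_closed_field poly poly"
  assumes "CHAR('a) > 0" and "pderiv R = 0" and "map_poly pderiv R = 0"
  shows "\<exists>Q. Q ^ CHAR('a) = R"
proof -
  have "\<exists>Q. Q ^ CHAR('a poly) = R"
  proof (rule exists_pth_root_poly)
    show "prime CHAR('a poly)" using assms(1) prime_CHAR_semidom by simp
    show "coeff R n = 0" if "\<not> CHAR('a poly) dvd n" for n
      using that assms(2) by (intro coeff_eq_0_if_pderiv_eq_0) simp_all
    show "\<exists>c. c ^ CHAR('a poly) = coeff R n" for n
      using exists_pth_root_if_pderiv_eq_0[OF assms(1), of "coeff R n"]
        arg_cong[OF assms(3), of "\<lambda>q. coeff q n"]
      by (simp add: coeff_map_poly)
  qed
  then show ?thesis by simp
qed

section \<open>Algebraic independence\<close>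

lemma nonconstant_transcendental:
  fixes F :: "'a::field poly poly"
  assumes "degree F > 0" and "eval2 (\<lambda>c. to_fract (polyC c)) [:r:] (to_fract F) g = 0"
  shows "r = 0"
proof -
  have "map_poly polyC r = map_poly (\<lambda>x. [:x:]) (map_poly (\<lambda>c. [:c:]) r)"
    by (simp add: map_poly_map_poly comp_def polyC_def[abs_def])
  then have "eval2 (\<lambda>c. to_fract (polyC c)) [:r:] (to_fract F) g
           = to_fract (pcompose (map_poly (\<lambda>c. [:c:]) r) F)"
    using ring_hom_poly_map_poly[OF is_ring_hom_to_fract is_ring_hom_polyC, of r F]
    by (simp add: eval2_const[OF is_ring_hom_to_fract_polyC] pcompose_altdef)
  with assms(2) have "pcompose (map_poly (\<lambda>c. [:c:]) r) F = 0"
    by simp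
  then have "map_poly (\<lambda>c. [:c:]) r = 0"
    using pcompose_eq_0 assms(1) by blast
  then show "r = 0"
    by (simp add: map_poly_eq_0_iff)
qed

lemma der_eval2_to_fract_polyC:
  fixes D :: "'a::field poly poly \<Rightarrow> 'a poly poly"
  assumes D: "is_derivation D" and const: "\<And>c. D (polyC c) = 0"
  shows "fract_der D (eval2 (\<lambda>c. to_fract (polyC c)) R f g)
       = eval2 (\<lambda>c. to_fract (polyC c)) (map_poly pderiv R) f g * fract_der D f
         + eval2 (\<lambda>c. to_fract (polyC c)) (pderiv R) f g * fract_der D g"
  using const
  by (intro der_eval2 is_derivation_fract_der[OF D] is_ring_hom_to_fract_polyC)
     (simp add: fract_der_to_fract[OF D])

definition coeff_degree_sum :: "'a::zero poly poly \<Rightarrow> nat" where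
  "coeff_degree_sum R = (\<Sum>j\<le>degree R. degree (coeff R j))"

definition descent_rel :: "('a::zero poly poly \<times> 'a poly poly) set" where
  "descent_rel = inv_image (less_than <*lex*> less_than) (\<lambda>R. (degree R, coeff_degree_sum R))"

lemma wf_descent_rel: "wf descent_rel"
  unfolding descent_rel_def by (intro wf_inv_image wf_lex_prod wf_less_than)

lemma degree_less_in_descent_rel: "degree Q < degree R \<Longrightarrow> (Q, R) \<in> descent_rel"
  by (simp add: descent_rel_def)

lemma map_poly_pderiv_in_descent_rel:
  fixes R :: "'a::idom poly poly"
  assumes nz: "map_poly pderiv R \<noteq> 0"
  shows "(map_poly pderiv R, R) \<in> descent_rel"
proof (cases "degree (map_poly pderiv R) = degree R")
  case deg: True
  have "coeff_degree_sum (map_poly pderiv R) = (\<Sum>j\<le>degree R. degree (pderiv (coeff R j)))"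
    unfolding coeff_degree_sum_def deg by (simp add: coeff_map_poly)
  also have "\<dots> < coeff_degree_sum R"
    unfolding coeff_degree_sum_def
  proof (rule sum_strict_mono_ex1)
    show "\<forall>j\<in>{..degree R}. degree (pderiv (coeff R j)) \<le> degree (coeff R j)"
      using degree_pderiv_less by (metis degree_0 less_imp_le zero_le)
    obtain j where j: "coeff (map_poly pderiv R) j \<noteq> 0" using nz by (metis leading_coeff_0_iff)
    then have "j \<le> degree R" using deg le_degree by metis
    moreover have "pderiv (coeff R j) \<noteq> 0" using j by (simp add: coeff_map_poly)
    ultimately show "\<exists>j\<in>{..degree R}. degree (pderiv (coeff R j)) < degree (coeff R j)"
      using degree_pderiv_less by blast
  qed simp
  finally show ?thesis using deg by (simp add: descent_rel_def)
next
  case False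
  then show ?thesis
    using map_poly_degree_leq[of pderiv R] by (simp add: descent_rel_def)
qed

text \<open>
  Descent on \<open>(deg\<^sub>Y R, coeff_degree_sum R)\<close>: a relation \<open>R(F, G) = 0\<close> differentiated by
  \<open>\<partial>/\<partial>X\<close> (which kills \<open>F\<close> but not \<open>G\<close>) and by \<open>\<partial>/\<partial>Y\<close> yields smaller relations unless both
  partial derivatives of \<open>R\<close> vanish; then \<open>R\<close> is a \<open>p\<close>-th power of a smaller relation.
\<close>
lemma algebraically_independent:
  fixes F :: "'a::alg_closed_field poly poly" and G :: "'a poly poly fract"
  assumes p: "CHAR('a) > 0"
    and F_X: "map_poly pderiv F = 0" and F_Y: "pderiv F \<noteq> 0"
    and G_X: "fract_der (map_poly pderiv) G \<noteq> 0"
    and R: "eval2 (\<lambda>c. to_fract (polyC c)) R (to_fract F) G = 0"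
  shows "R = 0"
proof -
  define ev where "ev = (\<lambda>R. eval2 (\<lambda>c. to_fract (polyC c)) R (to_fract F) G)"
  define DX where "DX = fract_der (map_poly (pderiv :: 'a poly \<Rightarrow> _))"
  have ev: "is_ring_hom ev" unfolding ev_def
    by (rule is_ring_hom_eval2[OF is_ring_hom_to_fract_polyC])
  have DX: "is_derivation DX"
    unfolding DX_def by (rule is_derivation_fract_der[OF is_derivation_map_poly_pderiv])
  have DY: "is_derivation (fract_der (pderiv :: 'a poly poly \<Rightarrow> _))"
    by (rule is_derivation_fract_der[OF is_derivation_pderiv])
  have DX_ev: "DX (ev R) = ev (pderiv R) * DX G" for R
    using der_eval2_to_fract_polyC[OF is_derivation_map_poly_pderiv, of R "to_fract F" G] F_X
    by (simp add: ev_def DX_def polyC_def map_poly_pCons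
        fract_der_to_fract[OF is_derivation_map_poly_pderiv])
  have DY_ev: "fract_der pderiv (ev R)
      = ev (map_poly pderiv R) * to_fract (pderiv F) + ev (pderiv R) * fract_der pderiv G" for R
    using der_eval2_to_fract_polyC[OF is_derivation_pderiv, of R "to_fract F" G]
    by (simp add: ev_def polyC_def fract_der_to_fract[OF is_derivation_pderiv])
  have p2: "CHAR('a) \<ge> 2" using prime_CHAR_semidom[OF p] prime_ge_2_nat by blast
  have "ev R = 0" using R by (simp add: ev_def)
  with wf_descent_rel show "R = 0"
  proof (induction R rule: wf_induct_rule)
    case (less R)
    show "R = 0"
    proof (rule ccontr)
      assume "R \<noteq> 0"
      have "degree R \<noteq> 0"
      proof
        assume "degree R = 0"
        then obtain r where "R = [:r:]" by (elim degree_eq_zeroE)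
        moreover have "degree F > 0" using degree_pderiv_less[OF F_Y] by simp
        ultimately have "r = 0"
          using less.prems nonconstant_transcendental[of F r G] by (simp add: ev_def)
        with \<open>R = [:r:]\<close> \<open>R \<noteq> 0\<close> show False by simp
      qed
      have R_Y: "pderiv R = 0"
      proof (rule ccontr)
        assume nz: "pderiv R \<noteq> 0"
        have "ev (pderiv R) = 0" using DX_ev[of R] less.prems G_X der_0[OF DX] by (simp add: DX_def)
        with less.IH nz show False using degree_less_in_descent_rel[OF degree_pderiv_less[OF nz]]
          by blast
      qed
      have R_X: "map_poly pderiv R = 0"
      proof (rule ccontr)
        assume nz: "map_poly pderiv R \<noteq> 0"
        have "ev (map_poly pderiv R) = 0"
          using DY_ev[of R] less.prems R_Y F_Y by (simp add: der_0[OF DY] ring_hom_0[OF ev])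
        with less.IH nz show False using map_poly_pderiv_in_descent_rel[OF nz] by blast
      qed
      obtain Q where Q: "Q ^ CHAR('a) = R"
        using exists_pth_root_if_partial_derivs_eq_0[OF p R_Y R_X] by blast
      have "Q \<noteq> 0" using Q \<open>R \<noteq> 0\<close> p by auto
      then have "degree R = CHAR('a) * degree Q" using Q by (metis degree_power_eq mult.commute)
      then have "(Q, R) \<in> descent_rel"
        using \<open>degree R \<noteq> 0\<close> p2 by (intro degree_less_in_descent_rel) simp
      moreover have "ev Q ^ CHAR('a) = ev R" using ring_hom_power[OF ev, of Q "CHAR('a)"] Q by simp
      then have "ev Q = 0" using less.prems p by simp
      ultimately show False using less.IH \<open>Q \<noteq> 0\<close> by blast
    qed
  qed
qed

lemma poly_bezout:
  fixes a b :: "'a::field poly"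
  assumes "coprime a b"
  shows "\<exists>u w. u * a + w * b = 1"
proof -
  define S where "S = {h. h \<noteq> 0 \<and> (\<exists>u w. h = u * a + w * b)}"
  have "a \<noteq> 0 \<or> b \<noteq> 0" using assms by auto
  then have "S \<noteq> {}" unfolding S_def by (metis (mono_tags, lifting) empty_iff mem_Collect_eq
      mult_1 mult_zero_left add_0 add.right_neutral)
  then obtain h where hS: "h \<in> S" and hmin: "\<And>h'. h' \<in> S \<Longrightarrow> degree h \<le> degree h'"
    using ex_has_least_nat[of "\<lambda>h. h \<in> S" _ degree] by blast
  obtain u w where huw: "h = u * a + w * b" and h0: "h \<noteq> 0" using hS unfolding S_def by blast
  have dvd: "h dvd u' * a + w' * b" for u' w'
  proof (rule ccontr)
    let ?c = "u' * a + w' * b"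
    assume "\<not> h dvd ?c"
    then have r0: "?c mod h \<noteq> 0" by (simp add: mod_eq_0_iff_dvd)
    have "?c mod h = (u' - (?c div h) * u) * a + (w' - (?c div h) * w) * b"
      using huw by (simp add: minus_div_mult_eq_mod[symmetric] algebra_simps)
    then have "?c mod h \<in> S" using r0 unfolding S_def by blast
    with hmin degree_mod_less'[OF h0 r0] show False by fastforce
  qed
  have "is_unit h" using dvd[of 1 0] dvd[of 0 1] assms coprime_common_divisor by simp
  then obtain k where "1 = h * k" by (auto elim: dvdE)
  then have "(k * u) * a + (k * w) * b = 1" using huw by (simp add: algebra_simps)
  then show ?thesis by blast
qed

lemma coprime_dvd_mult_poly:
  fixes a b c :: "'a::field poly"
  assumes "coprime a b" and "a dvd c * b"
  shows "a dvd c"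
proof -
  obtain u w where "u * a + w * b = 1" using poly_bezout[OF assms(1)] by blast
  then have "c = (c * u) * a + w * (c * b)" by (metis mult.assoc mult.commute mult_1 distrib_left)
  also have "a dvd \<dots>" using assms(2) by simp
  finally show ?thesis .
qed

lemma coprime_power_right_poly:
  fixes a b :: "'a::field poly"
  assumes "coprime a b"
  shows "coprime a (b ^ n)"
proof (induction n)
  case (Suc n)
  show ?case
  proof (rule coprimeI)
    fix c assume c: "c dvd a" "c dvd b ^ Suc n"
    have "coprime c b" using coprime_divisors[OF c(1) dvd_refl assms] .
    then have "c dvd b ^ n" using coprime_dvd_mult_poly[of c b "b ^ n"] c(2)
      by (simp add: mult.commute)
    with c(1) Suc.IH show "is_unit c" using coprime_common_divisor by blast
  qed
qed simp

lemma coprime_decomposition_poly: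
  fixes a b :: "'a::field poly"
  assumes "b \<noteq> 0"
  shows "\<exists>d f g. a = f * d \<and> b = g * d \<and> coprime f g \<and> d \<noteq> 0"
  using assms
proof (induction "degree b" arbitrary: a b rule: less_induct)
  case (less b a)
  show ?case
  proof (cases "coprime a b")
    case True
    then show ?thesis using less.prems by (intro exI[of _ 1] exI[of _ a] exI[of _ b]) auto
  next
    case False
    then obtain c a' b' where c: "\<not> is_unit c" "a = c * a'" "b = c * b'"
      unfolding coprime_def by (auto elim!: dvdE)
    then have "c \<noteq> 0" "b' \<noteq> 0" using less.prems by auto
    with c have "degree b' < degree b"
      by (simp add: degree_mult_eq is_unit_iff_degree)
    then obtain d f g where "a' = f * d" "b' = g * d" "coprime f g" "d \<noteq> 0"
      using less.hyps \<open>b' \<noteq> 0\<close> by blast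
    with c \<open>c \<noteq> 0\<close> show ?thesis by (intro exI[of _ "c * d"] exI[of _ f] exI[of _ g]) auto
  qed
qed

section \<open>\<open>F = s\<close> has no point over \<open>k(s)\<close>\<close>

lemma mult_ne_Suc_mult:
  fixes q x y :: nat
  assumes "q \<ge> 2"
  shows "q * x \<noteq> Suc (q * y)"
proof
  assume "q * x = Suc (q * y)"
  then have "q dvd q * y + 1" by (metis Suc_eq_plus1 dvd_triv_left)
  then have "q dvd 1" by (metis dvd_add_right_iff dvd_triv_left)
  with assms show False by simp
qed

lemma pderiv_cross_eq_if_proportional:
  fixes P Q \<alpha> \<beta> :: "'a::idom poly"
  assumes ratio: "Q * \<alpha> = P * \<beta>" and "pderiv \<alpha> = 0" "pderiv \<beta> = 0" "\<alpha> \<noteq> 0"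
  shows "pderiv P * Q = P * pderiv Q"
proof -
  have ratio': "pderiv Q * \<alpha> = pderiv P * \<beta>"
    using arg_cong[OF ratio, of pderiv] assms(2,3) by (simp add: pderiv_mult mult.commute)
  have "\<alpha> * (pderiv P * Q - P * pderiv Q) = pderiv P * (Q * \<alpha>) - P * (pderiv Q * \<alpha>)"
    by (simp add: algebra_simps)
  also have "\<dots> = pderiv P * (P * \<beta>) - P * (pderiv P * \<beta>)" by (simp only: ratio ratio')
  also have "\<dots> = 0" by (simp add: algebra_simps)
  finally show ?thesis using assms(4) by simp
qed

lemma cross_derivative_identity:
  fixes f g :: "'a::field poly"
  assumes "CHAR('a) = p"
  defines "P \<equiv> [:0, 1:] * g ^ (p + 2) - f ^ (p + 2)" and "Q \<equiv> f * g ^ (p + 1)"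
  shows "pderiv P * Q - P * pderiv Q
       = g ^ p * (f * g ^ (p + 3)
           - (pderiv f * g - f * pderiv g) * ([:0, 1:] * g ^ (p + 2) + f ^ (p + 2)))"
proof -
  have [simp]: "(of_nat p :: 'a) = 0" "(of_nat p :: 'a poly) = 0"
    using of_nat_CHAR[where 'a="'a"] of_nat_CHAR[where 'a="'a poly"] assms(1) by simp_all
  have pow: "pderiv (h ^ (p + n)) = of_nat n * h ^ (p + n - 1) * pderiv h" for h :: "'a poly" and n
    by (simp add: pderiv_power of_nat_poly)
  have hg: "pderiv (g ^ (p + 2)) = 2 * g ^ (p + 1) * pderiv g"
    and hf: "pderiv (f ^ (p + 2)) = 2 * f ^ (p + 1) * pderiv f"
    using pow[of g 2] pow[of f 2] by simp_all
  have "pderiv P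
      = pderiv [:0, 1:] * g ^ (p + 2) + [:0, 1:] * pderiv (g ^ (p + 2)) - pderiv (f ^ (p + 2))"
    unfolding P_def by (simp only: pderiv_diff pderiv_mult) (simp add: algebra_simps)
  also have "\<dots> = g ^ (p + 2) + 2 * [:0, 1:] * g ^ (p + 1) * pderiv g - 2 * f ^ (p + 1) * pderiv f"
    unfolding hg hf by (simp add: pderiv_pCons algebra_simps)
  finally have dP:
    "pderiv P = g ^ (p + 2) + 2 * [:0, 1:] * g ^ (p + 1) * pderiv g - 2 * f ^ (p + 1) * pderiv f" .
  have dQ: "pderiv Q = pderiv f * g ^ (p + 1) + f * g ^ p * pderiv g"
    unfolding Q_def using pow[of g 1] by (simp add: pderiv_mult algebra_simps)
  show ?thesis
    unfolding dP dQ unfolding P_def Q_def by (simp add: power_add algebra_simps numeral_eq_Suc)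
qed

lemma degree_power_ne_degree_X_mult_power:
  fixes f g :: "'a::field poly"
  assumes "g \<noteq> 0" and "q \<ge> 2"
  shows "degree (f ^ q) \<noteq> degree ([:0, 1:] * g ^ q)"
proof -
  have "degree ([:0, 1:] * g ^ q) = Suc (q * degree g)"
    using assms by (simp add: degree_mult_eq degree_power_eq)
  moreover have "degree (f ^ q) = q * degree f"
    by (cases "f = 0") (use assms in \<open>simp_all add: degree_power_eq power_0_left\<close>)
  ultimately show ?thesis using mult_ne_Suc_mult[OF assms(2)] by simp
qed

lemma degree_lt_X_mult_power_add_power:
  fixes f g :: "'a::field poly"
  assumes f: "f \<noteq> 0" and g: "g \<noteq> 0" and q: "q \<ge> 2"
  shows "degree f < degree ([:0, 1:] * g ^ q + f ^ q)"
proof -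
  define S where "S = [:0, 1:] * g ^ q"
  have "degree (S + f ^ q) = max (degree S) (degree (f ^ q))"
    using degree_power_ne_degree_X_mult_power[OF g q, of f] unfolding S_def[symmetric]
    by (cases "degree (f ^ q) < degree S") (simp_all add: degree_add_eq_left degree_add_eq_right)
  then have "degree (S + f ^ q) \<ge> degree S" "degree (S + f ^ q) \<ge> degree (f ^ q)" by simp_all
  moreover have "degree S \<ge> 1" using g by (simp add: S_def degree_mult_eq degree_power_eq)
  moreover have "degree (f ^ q) \<ge> 2 * degree f"
    using degree_power_eq[OF f, of q] mult_le_mono1[OF q, of "degree f"] by simp
  ultimately show ?thesis unfolding S_def by linarith
qed

lemma coprime_mult_add_power_poly:
  fixes f g c :: "'a::field poly"
  assumes "coprime f g"
  shows "coprime (c * g + f ^ n) g"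
proof (rule coprimeI)
  fix d assume d: "d dvd c * g + f ^ n" "d dvd g"
  then have "d dvd (c * g + f ^ n) - c * g" by (intro dvd_diff) simp_all
  then have "d dvd f ^ n" by simp
  moreover have "coprime g (f ^ n)" using assms coprime_power_right_poly coprime_commute by blast
  ultimately show "is_unit d" using d(2) coprime_common_divisor by blast
qed

text \<open>
  With \<open>y = f/g\<close> in lowest terms and \<open>x\<^sup>p = \<alpha>/\<beta>\<close>, the equation \<open>(x\<^sup>p + y\<^sup>p\<^sup>+\<^sup>1) y = s\<close> says
  \<open>x\<^sup>p = P/Q\<close> with \<open>P = s g\<^sup>p\<^sup>+\<^sup>2 - f\<^sup>p\<^sup>+\<^sup>2\<close>, \<open>Q = f g\<^sup>p\<^sup>+\<^sup>1\<close>. As \<open>x\<^sup>p\<close> has derivative 0, the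
  cross derivative identity forces \<open>M = s g\<^sup>p\<^sup>+\<^sup>2 + f\<^sup>p\<^sup>+\<^sup>2\<close>, which is prime to \<open>g\<close>, to divide
  \<open>f\<close>: impossible for degree reasons.
\<close>
lemma no_coprime_solution:
  fixes f g \<alpha> \<beta> :: "'a::field poly"
  assumes p: "CHAR('a) = p" "prime p"
    and fg: "coprime f g" and g: "g \<noteq> 0" and \<beta>: "\<beta> \<noteq> 0"
    and \<alpha>': "pderiv \<alpha> = 0" and \<beta>': "pderiv \<beta> = 0"
  shows "f * \<alpha> * g ^ (p + 1) + f ^ (p + 2) * \<beta> \<noteq> [:0, 1:] * \<beta> * g ^ (p + 2)"
proof
  assume E: "f * \<alpha> * g ^ (p + 1) + f ^ (p + 2) * \<beta> = [:0, 1:] * \<beta> * g ^ (p + 2)"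
  have p2: "p + 2 \<ge> 2" by simp
  have "f \<noteq> 0"
  proof
    assume "f = 0"
    with E \<beta> g show False by simp
  qed
  have "\<alpha> \<noteq> 0"
  proof
    assume "\<alpha> = 0"
    with E have "\<beta> * f ^ (p + 2) = \<beta> * ([:0, 1:] * g ^ (p + 2))" by (simp add: algebra_simps)
    then have eq: "f ^ (p + 2) = [:0, 1:] * g ^ (p + 2)" using mult_left_cancel[OF \<beta>] by blast
    show False using degree_power_ne_degree_X_mult_power[OF g p2, of f] unfolding eq by simp
  qed
  define M where "M = [:0, 1:] * g ^ (p + 2) + f ^ (p + 2)"
  define W where "W = pderiv f * g - f * pderiv g"
  have "(f * g ^ (p + 1)) * \<alpha> = ([:0, 1:] * g ^ (p + 2) - f ^ (p + 2)) * \<beta>"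
    using E by (simp add: algebra_simps)
  then have "pderiv ([:0, 1:] * g ^ (p + 2) - f ^ (p + 2)) * (f * g ^ (p + 1))
           = ([:0, 1:] * g ^ (p + 2) - f ^ (p + 2)) * pderiv (f * g ^ (p + 1))"
    using \<alpha>' \<beta>' \<open>\<alpha> \<noteq> 0\<close> by (rule pderiv_cross_eq_if_proportional)
  then have "g ^ p * (f * g ^ (p + 3) - W * M) = 0"
    using cross_derivative_identity[OF p(1), of g f] by (simp add: W_def M_def)
  then have "M dvd f * g ^ (p + 3)" using g by simp
  moreover have "coprime M g"
    using coprime_mult_add_power_poly[OF fg, of "[:0, 1:] * g ^ (p + 1)" "p + 2"]
    by (simp add: M_def power_Suc2 mult_ac)
  ultimately have "M dvd f" using coprime_power_right_poly coprime_dvd_mult_poly by blast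
  then have "degree M \<le> degree f" using \<open>f \<noteq> 0\<close> by (rule dvd_imp_degree_le)
  with degree_lt_X_mult_power_add_power[OF \<open>f \<noteq> 0\<close> g p2] show False by (simp add: M_def)
qed

lemma no_rational_solution:
  fixes a1 b1 a2 b2 :: "'a::field poly"
  assumes p: "CHAR('a) = p" "prime p" and b1: "b1 \<noteq> 0" and b2: "b2 \<noteq> 0"
  shows "a2 * a1 ^ p * b2 ^ (p + 1) + a2 ^ (p + 2) * b1 ^ p \<noteq> [:0, 1:] * b1 ^ p * b2 ^ (p + 2)"
proof
  assume E: "a2 * a1 ^ p * b2 ^ (p + 1) + a2 ^ (p + 2) * b1 ^ p = [:0, 1:] * b1 ^ p * b2 ^ (p + 2)"
  obtain d f g where fd: "a2 = f * d" and gd: "b2 = g * d" and "coprime f g" and d: "d \<noteq> 0"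
    using coprime_decomposition_poly[OF b2] by blast
  have "g \<noteq> 0" using b2 gd by auto
  have pth_power: "pderiv (h ^ p) = 0" for h :: "'a poly"
    using of_nat_CHAR[where 'a='a] p(1) by (simp add: pderiv_power)
  have "d ^ (p + 2) * (f * a1 ^ p * g ^ (p + 1) + f ^ (p + 2) * b1 ^ p)
      = d ^ (p + 2) * ([:0, 1:] * b1 ^ p * g ^ (p + 2))"
    using E unfolding fd gd by (simp add: algebra_simps)
  then have "f * a1 ^ p * g ^ (p + 1) + f ^ (p + 2) * b1 ^ p = [:0, 1:] * b1 ^ p * g ^ (p + 2)"
    by (rule mult_left_cancel[THEN iffD1, rotated]) (simp add: d)
  moreover have "b1 ^ p \<noteq> 0" using b1 by simp
  ultimately show False
    using no_coprime_solution[OF p \<open>coprime f g\<close> \<open>g \<noteq> 0\<close> _ pth_power pth_power] by blast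
qed

section \<open>\<open>F\<close> is not a field generator\<close>

lemma infinite_UNIV_alg_closed: "infinite (UNIV :: 'a::alg_closed_field set)"
proof
  assume fin: "finite (UNIV :: 'a set)"
  define P :: "'a poly" where "P = (\<Prod>a\<in>UNIV. [:- a, 1:])"
  have "degree P = card (UNIV :: 'a set)"
    unfolding P_def by (subst degree_prod_sum_eq) simp_all
  moreover have "card {0::'a, 1} \<le> card (UNIV :: 'a set)" using fin by (intro card_mono) auto
  ultimately have "degree (P + 1) > 0" by (simp add: degree_add_eq_left)
  then obtain x where "poly (P + 1) x = 0" using alg_closed_imp_poly_has_root by blast
  moreover have "poly P x = 0" unfolding P_def poly_prod using fin by (intro prod_zero) auto
  ultimately show False by simp
qed

lemma exists_common_const_nonroot:
  fixes B1 B2 :: "'a::alg_closed_field poly poly"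
  assumes "B1 \<noteq> 0" and "B2 \<noteq> 0"
  shows "\<exists>t. poly B1 [:t:] \<noteq> 0 \<and> poly B2 [:t:] \<noteq> 0"
proof -
  have "finite {t. poly B [:t:] = 0}" if "B \<noteq> 0" for B :: "'a poly poly"
  proof -
    have "{t. poly B [:t:] = 0} \<subseteq> (\<lambda>q. coeff q 0) ` {q. poly B q = 0}" by force
    then show ?thesis using poly_roots_finite[OF that] finite_surj by blast
  qed
  then have "finite ({t. poly B1 [:t:] = 0} \<union> {t. poly B2 [:t:] = 0})" using assms by simp
  then show ?thesis using infinite_UNIV_alg_closed ex_new_if_finite by blast
qed

lemma gen_field_subset_eval2_quotients:
  fixes \<kappa> :: "'a::field \<Rightarrow> 'b::field"
  assumes \<kappa>: "is_ring_hom \<kappa>"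
  shows "gen_field \<kappa> {x, y} \<subseteq> {eval2 \<kappa> A x y / eval2 \<kappa> B x y | A B. eval2 \<kappa> B x y \<noteq> 0}"
    (is "_ \<subseteq> ?Q")
proof (rule gen_field_least)
  let ?ev = "\<lambda>A. eval2 \<kappa> A x y"
  have ev: "is_ring_hom ?ev" by (rule is_ring_hom_eval2[OF \<kappa>])
  have ev_in: "?ev A \<in> ?Q" for A
  proof -
    have "?ev A = ?ev A / ?ev 1" "?ev 1 \<noteq> 0" by (simp_all add: ring_hom_1[OF ev])
    then show ?thesis by blast
  qed
  show "\<kappa> c \<in> ?Q" for c using ev_in[of "polyC c"] by (simp add: eval2_polyC[OF \<kappa>])
  show "{x, y} \<subseteq> ?Q" using ev_in[of polyX] ev_in[of polyY]
    by (simp add: eval2_polyX[OF \<kappa>] eval2_polyY[OF \<kappa>])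
  show "is_subfield ?Q"
    unfolding is_subfield_def
  proof (intro conjI ballI)
    show "0 \<in> ?Q" "1 \<in> ?Q" using ev_in[of 0] ev_in[of 1]
      by (simp_all add: ring_hom_0[OF ev] ring_hom_1[OF ev])
  next
    fix u v assume "u \<in> ?Q" "v \<in> ?Q"
    then obtain A B C D where u: "?ev B \<noteq> 0" "u = ?ev A / ?ev B"
      and v: "?ev D \<noteq> 0" "v = ?ev C / ?ev D"
      by blast
    have BD: "?ev (B * D) \<noteq> 0" using u v by (simp add: ring_hom_mult[OF ev])
    have "u + v = ?ev (A * D + C * B) / ?ev (B * D)" "u - v = ?ev (A * D - C * B) / ?ev (B * D)"
      "u * v = ?ev (A * C) / ?ev (B * D)"
      using u(1) v(1) unfolding u(2) v(2) by (simp_all add: ring_hom_simps[OF ev] field_simps)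
    with BD show "u + v \<in> ?Q" "u - v \<in> ?Q" "u * v \<in> ?Q" by blast+
  next
    fix u assume "u \<in> ?Q"
    then obtain A B where u: "?ev B \<noteq> 0" "u = ?ev A / ?ev B" by blast
    show "inverse u \<in> ?Q"
    proof (cases "?ev A = 0")
      case True
      then show ?thesis using u ev_in[of 0] by (simp add: ring_hom_0[OF ev])
    next
      case False
      then have "inverse u = ?ev B / ?ev A" using u by simp
      with False show ?thesis by blast
    qed
  qed
qed

lemma fract_der_generator_ne_0:
  fixes F :: "'a::field poly poly"
  assumes gen: "kFrac {to_fract F, G} = UNIV" and F_X: "map_poly pderiv F = 0"
  shows "fract_der (map_poly pderiv) G \<noteq> 0"
proof
  let ?D = "map_poly (pderiv :: 'a poly \<Rightarrow> _)"
  note D = is_derivation_map_poly_pderiv[where 'b='a]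
  assume "fract_der ?D G = 0"
  with F_X have "kFrac {to_fract F, G} \<subseteq> {h. fract_der ?D h = 0}"
    by (intro kFrac_least subfield_fract_der_kernel[OF D])
       (simp_all add: fract_der_to_fract[OF D] polyC_def map_poly_pCons)
  with gen have "fract_der ?D (to_fract polyX) = 0" by auto
  then show False
    by (simp add: fract_der_to_fract[OF D] polyX_def map_poly_pCons pderiv_pCons one_pCons)
qed

lemma partial_derivatives_F:
  fixes F :: "'a::field poly poly"
  assumes F: "F = (polyX ^ p + polyY ^ (p + 1)) * polyY" and p: "CHAR('a) = p"
  shows "map_poly pderiv F = 0" and "pderiv F \<noteq> 0"
proof -
  note D = is_derivation_map_poly_pderiv[where 'b='a]
  have "map_poly pderiv (polyY :: 'a poly poly) = 0" by (simp add: polyY_def map_poly_pCons)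
  moreover have "(of_nat p :: 'a poly poly) = 0" using of_nat_CHAR[where 'a="'a poly poly"] p
    by simp
  ultimately show "map_poly pderiv F = 0"
    by (simp add: F der_mult[OF D] der_add[OF D] der_power[OF D])
  have "coeff (pderiv F) 0 = [:0, 1:] ^ p"
    by (simp add: F coeff_pderiv polyX_def polyY_def coeff_0_power)
  then show "pderiv F \<noteq> 0" by auto
qed

lemma field_generator_quotient:
  fixes F :: "'a::field poly poly"
  assumes "kFrac {to_fract F, G} = UNIV"
  defines "ev \<equiv> \<lambda>R. eval2 (\<lambda>c. to_fract (polyC c)) R (to_fract F) G"
  shows "\<exists>A B. ev B \<noteq> 0 \<and> h * ev B = ev A"
proof -
  have "h \<in> {ev A / ev B | A B. ev B \<noteq> 0}"
    using assms(1)
      gen_field_subset_eval2_quotients[OF is_ring_hom_to_fract_polyC, of "to_fract F" G]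
    unfolding kFrac_def ev_def by blast
  then obtain A B where "ev B \<noteq> 0" "h = ev A / ev B" by blast
  then have "ev B \<noteq> 0 \<and> h * ev B = ev A" by simp
  then show ?thesis by blast
qed

lemma clear_denominators_F:
  fixes x y a1 b1 a2 b2 :: "'b::comm_ring_1"
  assumes "x * b1 = a1" "y * b2 = a2"
  shows "(x ^ p + y ^ (p + 1)) * y * b1 ^ p * b2 ^ (p + 2)
       = a2 * a1 ^ p * b2 ^ (p + 1) + a2 ^ (p + 2) * b1 ^ p"
  unfolding assms[symmetric] by (simp add: power_mult_distrib power_add algebra_simps)

text \<open>
  If \<open>k(F, G) = k(X, Y)\<close>, then \<open>X = A\<^sub>1(F,G)/B\<^sub>1(F,G)\<close>, \<open>Y = A\<^sub>2(F,G)/B\<^sub>2(F,G)\<close>, and by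
  algebraic independence of \<open>F, G\<close> the defining equation of \<open>F\<close> becomes a polynomial identity
  \<open>R = 0\<close> in \<open>k[S, T]\<close> (encoded like \<open>k[X, Y]\<close>, so \<^const>\<open>polyX\<close> plays the role of \<open>S\<close>).
  Specialising \<open>T\<close> to a generic constant gives a point of \<open>F = s\<close> over \<open>k(s)\<close>.
\<close>
lemma not_field_generator_F:
  fixes F :: "'a::alg_closed_field poly poly"
  assumes p: "CHAR('a) = p" "p > 0" and F: "F = (polyX ^ p + polyY ^ (p + 1)) * polyY"
  shows "\<not> field_generator F"
proof
  assume "field_generator F"
  then obtain G where gen: "kFrac {to_fract F, G} = UNIV" unfolding field_generator_def by blast
  define ev where "ev = (\<lambda>R. eval2 (\<lambda>c. to_fract (polyC c)) R (to_fract F) G)"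
  note \<kappa> = is_ring_hom_to_fract_polyC[where 'a='a]
  have ev: "is_ring_hom ev" unfolding ev_def by (rule is_ring_hom_eval2[OF \<kappa>])
  have F_X: "map_poly pderiv F = 0" and F_Y: "pderiv F \<noteq> 0"
    using partial_derivatives_F[OF F p(1)] by auto
  have indep: "ev R = 0 \<Longrightarrow> R = 0" for R
    using algebraically_independent[of F G R] p F_X F_Y fract_der_generator_ne_0[OF gen F_X]
    by (simp add: ev_def)
  obtain A1 B1 where AB1: "ev B1 \<noteq> 0" "to_fract polyX * ev B1 = ev A1"
    using field_generator_quotient[OF gen] unfolding ev_def by blast
  obtain A2 B2 where AB2: "ev B2 \<noteq> 0" "to_fract polyY * ev B2 = ev A2"
    using field_generator_quotient[OF gen] unfolding ev_def by blast
  define R where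
    "R = A2 * A1 ^ p * B2 ^ (p + 1) + A2 ^ (p + 2) * B1 ^ p - polyX * B1 ^ p * B2 ^ (p + 2)"
  have F_frac: "to_fract F = (to_fract polyX ^ p + to_fract polyY ^ (p + 1)) * to_fract polyY"
    by (simp add: F to_fract_power)
  have "ev R = ev A2 * ev A1 ^ p * ev B2 ^ (p + 1) + ev A2 ^ (p + 2) * ev B1 ^ p
             - to_fract F * ev B1 ^ p * ev B2 ^ (p + 2)"
    unfolding R_def ev_def by (simp only: ring_hom_simps[OF ev[unfolded ev_def]] eval2_polyX[OF \<kappa>])
  also have "to_fract F * ev B1 ^ p * ev B2 ^ (p + 2)
           = ev A2 * ev A1 ^ p * ev B2 ^ (p + 1) + ev A2 ^ (p + 2) * ev B1 ^ p"
    unfolding F_frac by (rule clear_denominators_F[OF AB1(2) AB2(2)])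
  finally have "ev R = 0" by simp
  then have "R = 0" by (rule indep)
  have "B1 \<noteq> 0" "B2 \<noteq> 0" using AB1(1) AB2(1) ring_hom_0[OF ev] by auto
  then obtain t where t: "poly B1 [:t:] \<noteq> 0" "poly B2 [:t:] \<noteq> 0"
    using exists_common_const_nonroot by blast
  have "poly R [:t:] = 0" using \<open>R = 0\<close> by simp
  moreover have "prime p" using prime_CHAR_semidom[where 'a='a] p by simp
  ultimately show False
    using no_rational_solution[OF p(1) _ t, of "poly A2 [:t:]" "poly A1 [:t:]"]
    by (simp add: R_def polyX_def)
qed

section \<open>The fibres \<open>F = c\<close>, \<open>c \<noteq> 0\<close>, are rational\<close>

lemma card_roots_eq_degree_if_separable:
  fixes \<psi> :: "'a::alg_closed_field poly"
  assumes "\<psi> \<noteq> 0" and "\<And>x. poly \<psi> x = 0 \<Longrightarrow> poly (pderiv \<psi>) x \<noteq> 0"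
  shows "card {x. poly \<psi> x = 0} = degree \<psi>"
  using assms
proof (induction "degree \<psi>" arbitrary: \<psi> rule: less_induct)
  case (less \<psi>)
  show ?case
  proof (cases "degree \<psi> = 0")
    case True
    then obtain a where "\<psi> = [:a:]" by (elim degree_eq_zeroE)
    with less.prems True show ?thesis by simp
  next
    case False
    then obtain x where x: "poly \<psi> x = 0" using alg_closed_imp_poly_has_root by blast
    then have "[:-x, 1:] dvd \<psi>" by (subst (asm) poly_eq_0_iff_dvd)
    then obtain q where q: "\<psi> = [:-x, 1:] * q" by (elim dvdE)
    have q0: "q \<noteq> 0" using q less.prems by auto
    have dq: "degree \<psi> = Suc (degree q)" unfolding q using q0 by (subst degree_mult_eq) auto
    have dpsi: "pderiv \<psi> = q + [:-x, 1:] * pderiv q"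
      unfolding q by (simp add: pderiv_mult pderiv_pCons pderiv_diff pderiv_smult)
    have qx: "poly q x \<noteq> 0" using less.prems(2)[OF x] dpsi by simp
    have "poly (pderiv q) y \<noteq> 0" if "poly q y = 0" for y
      using less.prems(2)[of y] that dpsi q by auto
    then have "card {y. poly q y = 0} = degree q"
      using less.hyps[of q] dq q0 by simp
    moreover have "{y. poly \<psi> y = 0} = insert x {y. poly q y = 0}" unfolding q by auto
    ultimately show ?thesis using qx dq poly_roots_finite[OF q0] by simp
  qed
qed

lemma card_roots_trinomial:
  fixes \<gamma> :: "'a::alg_closed_field"
  assumes "CHAR('a) = p"
  shows "\<exists>B. finite B \<and> (\<forall>u. u \<notin> B \<longrightarrow> card {x. x ^ (p + 2) + u * x - \<gamma> = 0} = p + 2)"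
proof (intro exI conjI allI impI)
  define B where "B = (\<lambda>x. - 2 * x ^ (p + 1)) ` {x. poly (monom 1 (p + 2) + [:\<gamma>:]) x = 0}"
  have "coeff (monom 1 (p + 2) + [:\<gamma>:]) (p + 2) \<noteq> 0" by simp
  then have "monom 1 (p + 2) + [:\<gamma>:] \<noteq> 0" by (metis coeff_0)
  then show "finite B" unfolding B_def by (intro finite_imageI poly_roots_finite)
  fix u assume u: "u \<notin> B"
  define \<psi> :: "'a poly" where "\<psi> = monom 1 (p + 2) + [:- \<gamma>, u:]"
  have ev: "poly \<psi> x = x ^ (p + 2) + u * x - \<gamma>" for x
    by (simp add: \<psi>_def poly_monom algebra_simps)
  have "(of_nat (p + 2) :: 'a) = 2" using of_nat_CHAR[where 'a='a] assms by simp
  then have dpsi: "poly (pderiv \<psi>) x = 2 * x ^ (p + 1) + u" for x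
    by (simp add: \<psi>_def pderiv_add pderiv_monom pderiv_pCons poly_monom)
  have deg: "degree \<psi> = p + 2"
    unfolding \<psi>_def by (subst degree_add_eq_left) (auto simp: degree_monom_eq)
  have sep: "poly (pderiv \<psi>) x \<noteq> 0" if "poly \<psi> x = 0" for x
  proof
    assume "poly (pderiv \<psi>) x = 0"
    then have e2: "2 * x ^ (p + 1) + u = 0" using dpsi by simp
    then have u_eq: "u = - 2 * x ^ (p + 1)" by (simp add: eq_neg_iff_add_eq_0 add.commute)
    have "x ^ (p + 2) + \<gamma> = x * (2 * x ^ (p + 1) + u) - (x ^ (p + 2) + u * x - \<gamma>)"
      by (simp add: algebra_simps)
    also have "\<dots> = 0" using that ev e2 by simp
    finally have "poly (monom 1 (p + 2) + [:\<gamma>:]) x = 0" by (simp add: poly_monom)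
    with u u_eq show False unfolding B_def by blast
  qed
  have "\<psi> \<noteq> 0" using deg by auto
  from card_roots_eq_degree_if_separable[OF this sep] deg have "card {x. poly \<psi> x = 0} = p + 2"
    by simp
  then show "card {x. x ^ (p + 2) + u * x - \<gamma> = 0} = p + 2" by (simp add: ev)
qed

text \<open>
  For generic \<open>u\<close>, the \<open>p + 2\<close> roots \<open>\<tau>\<close> of \<open>\<tau>\<^sup>p\<^sup>+\<^sup>2 + u \<tau> - \<gamma>\<close> give \<open>p + 2\<close> distinct values
  \<open>\<tau>\<^sup>p\<close> at which \<open>r(u, -)\<close> vanishes.
\<close>
lemma eq_0_if_vanishes_on_curve:
  fixes r :: "'a::alg_closed_field poly poly" and \<gamma> :: 'a
  assumes p: "CHAR('a) = p" "p > 0" and "\<gamma> \<noteq> 0" and deg: "degree r < p + 2"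
    and vanish: "\<And>\<tau>. \<tau> \<noteq> 0 \<Longrightarrow> eval2 (\<lambda>a. a) r ((\<gamma> - \<tau> ^ (p + 2)) / \<tau>) (\<tau> ^ p) = 0"
  shows "r = 0"
proof -
  obtain B where B: "finite B" "\<And>u. u \<notin> B \<Longrightarrow> card {x. x ^ (p + 2) + u * x - \<gamma> = 0} = p + 2"
    using card_roots_trinomial[OF p(1)] by blast
  have zero: "poly (coeff r j) u = 0" if u: "u \<notin> B" for u j
  proof -
    define T where "T = {x. x ^ (p + 2) + u * x - \<gamma> = 0}"
    define \<Lambda> where "\<Lambda> = map_poly (\<lambda>c. poly c u) r"
    have "inj_on (\<lambda>x. x ^ p) T"
    proof (rule inj_onI)
      fix x y :: 'a assume "x ^ p = y ^ p"
      then show "x = y" using frobenius_inj[of x y] prime_CHAR_semidom[where 'a='a] p by simp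
    qed
    then have card: "card ((\<lambda>x. x ^ p) ` T) = p + 2" using B(2)[OF u]
      by (simp add: card_image T_def)
    have "\<Lambda> = 0"
    proof (rule poly_eqI_degree[of "(\<lambda>x. x ^ p) ` T"])
      fix y assume "y \<in> (\<lambda>x. x ^ p) ` T"
      then obtain \<tau> where \<tau>: "\<tau> \<in> T" "y = \<tau> ^ p" by blast
      then have "\<tau> \<noteq> 0" using \<open>\<gamma> \<noteq> 0\<close> unfolding T_def by auto
      moreover from this \<tau>(1) have "u = (\<gamma> - \<tau> ^ (p + 2)) / \<tau>"
        unfolding T_def by (simp add: field_simps)
      ultimately show "poly \<Lambda> y = poly 0 y" using vanish \<tau>(2) by (simp add: \<Lambda>_def eval2_def)
    next
      show "degree \<Lambda> < card ((\<lambda>x. x ^ p) ` T)"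
        unfolding card \<Lambda>_def using map_poly_degree_leq[of "\<lambda>c. poly c u" r] deg by linarith
    qed (simp add: card)
    then have "coeff \<Lambda> j = 0" by simp
    then show ?thesis by (simp add: \<Lambda>_def coeff_map_poly)
  qed
  show ?thesis
  proof (rule poly_eqI)
    fix j
    have "UNIV - B \<subseteq> {u. poly (coeff r j) u = 0}" using zero by blast
    moreover have "infinite (UNIV - B)" using infinite_UNIV_alg_closed B(1)
      by (rule Diff_infinite_finite[rotated])
    ultimately have "infinite {u. poly (coeff r j) u = 0}" using finite_subset by blast
    then show "coeff r j = coeff 0 j" using poly_roots_finite[of "coeff r j"] by auto
  qed
qed

lemma clear_denominators_eval2:
  fixes P :: "'a::field poly poly" and D U V :: "'a poly"
  assumes D: "D \<noteq> 0"
  defines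
    "ev \<equiv> \<lambda>P. eval2 (\<lambda>a. to_fract [:a:]) P (to_fract U / to_fract D) (to_fract V / to_fract D)"
    and "ev_at \<equiv> \<lambda>\<tau> P. eval2 (\<lambda>a. a) P (poly U \<tau> / poly D \<tau>) (poly V \<tau> / poly D \<tau>)"
  shows "\<exists>N \<Psi>. to_fract \<Psi> = ev P * to_fract D ^ N
              \<and> (\<forall>\<tau>. poly D \<tau> \<noteq> 0 \<longrightarrow> poly \<Psi> \<tau> = poly D \<tau> ^ N * ev_at \<tau> P)"
proof (induction P rule: polyXY_induct)
  have ev: "is_ring_hom ev" and ev_at: "is_ring_hom (ev_at \<tau>)" for \<tau>
    unfolding ev_def ev_at_def
    by (simp_all add: is_ring_hom_eval2 is_ring_hom_to_fract_const is_ring_hom_id)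
  note eval2_simps = eval2_polyC eval2_polyX eval2_polyY
  {
    case (C c)
    show ?case
      by (intro exI[of _ 0] exI[of _ "[:c:]"])
         (simp add: ev_def ev_at_def eval2_simps is_ring_hom_to_fract_const is_ring_hom_id)
  next
    case X
    show ?case
      using D by (intro exI[of _ 1] exI[of _ U])
        (simp add: ev_def ev_at_def eval2_simps is_ring_hom_to_fract_const is_ring_hom_id)
  next
    case Y
    show ?case
      using D by (intro exI[of _ 1] exI[of _ V])
        (simp add: ev_def ev_at_def eval2_simps is_ring_hom_to_fract_const is_ring_hom_id)
  next
    case (add a b)
    then obtain N1 \<Psi>1 N2 \<Psi>2 where
      a: "to_fract \<Psi>1 = ev a * to_fract D ^ N1"
         "\<forall>\<tau>. poly D \<tau> \<noteq> 0 \<longrightarrow> poly \<Psi>1 \<tau> = poly D \<tau> ^ N1 * ev_at \<tau> a"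
      and b: "to_fract \<Psi>2 = ev b * to_fract D ^ N2"
             "\<forall>\<tau>. poly D \<tau> \<noteq> 0 \<longrightarrow> poly \<Psi>2 \<tau> = poly D \<tau> ^ N2 * ev_at \<tau> b"
      by blast
    show ?case
      using a b
      by (intro exI[of _ "N1 + N2"] exI[of _ "\<Psi>1 * D ^ N2 + \<Psi>2 * D ^ N1"])
         (simp add: ring_hom_add[OF ev] ring_hom_add[OF ev_at] to_fract_power power_add
           algebra_simps)
  next
    case (mult a b)
    then obtain N1 \<Psi>1 N2 \<Psi>2 where
      a: "to_fract \<Psi>1 = ev a * to_fract D ^ N1"
         "\<forall>\<tau>. poly D \<tau> \<noteq> 0 \<longrightarrow> poly \<Psi>1 \<tau> = poly D \<tau> ^ N1 * ev_at \<tau> a"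
      and b: "to_fract \<Psi>2 = ev b * to_fract D ^ N2"
             "\<forall>\<tau>. poly D \<tau> \<noteq> 0 \<longrightarrow> poly \<Psi>2 \<tau> = poly D \<tau> ^ N2 * ev_at \<tau> b"
      by blast
    show ?case
      using a b
      by (intro exI[of _ "N1 + N2"] exI[of _ "\<Psi>1 * \<Psi>2"])
         (simp add: ring_hom_mult[OF ev] ring_hom_mult[OF ev_at] power_add algebra_simps)
  }
qed

lemma kernel_eq_multiples_of_monic:
  fixes \<Phi> :: "'a::comm_ring_1 poly" and h :: "'a poly \<Rightarrow> 'b::comm_ring_1"
  assumes h: "is_ring_hom h" and monic: "lead_coeff \<Phi> = 1" and root: "h \<Phi> = 0"
    and low: "\<And>r. degree r < degree \<Phi> \<Longrightarrow> h r = 0 \<Longrightarrow> r = 0"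
  shows "h P = 0 \<longleftrightarrow> \<Phi> dvd P"
proof
  have \<Phi>: "\<Phi> \<noteq> 0" using monic by auto
  assume hP: "h P = 0"
  obtain q r where qr: "pseudo_divmod P \<Phi> = (q, r)" by fastforce
  have P: "P = \<Phi> * q + r" using pseudo_divmod(1)[OF \<Phi> qr] monic by simp
  then have "h r = 0" using hP root by (simp add: ring_hom_add[OF h] ring_hom_mult[OF h])
  then have "r = 0" using pseudo_divmod(2)[OF \<Phi> qr] low by blast
  then show "\<Phi> dvd P" using P by simp
next
  assume "\<Phi> dvd P"
  then show "h P = 0" using root by (auto simp: ring_hom_mult[OF h])
qed

lemma irreducible_if_kernel_eq_multiples:
  fixes \<Phi> :: "'a::{idom,algebraic_semidom}" and h :: "'a \<Rightarrow> 'b::idom"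
  assumes h: "is_ring_hom h" and ker: "\<And>P. h P = 0 \<longleftrightarrow> \<Phi> dvd P" and "\<Phi> \<noteq> 0" "\<not> is_unit \<Phi>"
  shows "irreducible \<Phi>"
  using assms
  by (intro prime_elem_imp_irreducible prime_elemI) (auto simp: ring_hom_mult[OF h] ker[symmetric])

text \<open>
  \<open>z\<^sup>n\<close> is a \<open>K\<close>-linear combination of \<open>1, z\<close>, with the same coefficients for the other root
  \<open>z'\<close>; for \<open>n = p\<close> the coefficient of \<open>z\<close> cannot vanish, as Frobenius is injective.
\<close>
lemma root_in_subfield_if_conjugate:
  fixes z z' :: "'b::field"
  assumes K: "is_subfield K" and abc: "a \<in> K" "b \<in> K" "c \<in> K" "a \<noteq> 0"
    and z: "a * z ^ 2 + b * z = c" and z': "a * z' ^ 2 + b * z' = c" and "z \<noteq> z'"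
    and p: "prime CHAR('b)" and zp: "z ^ CHAR('b) \<in> K"
  shows "z \<in> K"
proof -
  have "\<exists>\<alpha>\<in>K. \<exists>\<beta>\<in>K. z ^ n = \<alpha> + \<beta> * z \<and> z' ^ n = \<alpha> + \<beta> * z'" for n
  proof (induction n)
    case 0
    show ?case using K by (intro bexI[of _ 1] bexI[of _ 0]) (simp_all add: subfield_0 subfield_1)
  next
    case (Suc n)
    then obtain \<alpha> \<beta> where \<alpha>\<beta>: "\<alpha> \<in> K" "\<beta> \<in> K" "z ^ n = \<alpha> + \<beta> * z" "z' ^ n = \<alpha> + \<beta> * z'"
      by blast
    have step: "w ^ Suc n = \<beta> * c / a + (\<alpha> - \<beta> * b / a) * w"
      if "w ^ n = \<alpha> + \<beta> * w" "a * w ^ 2 + b * w = c" for w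
    proof -
      have "w ^ Suc n = \<alpha> * w + \<beta> * w ^ 2" using that(1)
        by (simp add: power2_eq_square algebra_simps)
      also have "w ^ 2 = (c - b * w) / a" using that(2) abc(4) by (simp add: field_simps)
      finally show ?thesis using abc(4) by (simp add: field_simps)
    qed
    show ?case
      using \<alpha>\<beta> step[OF \<alpha>\<beta>(3) z] step[OF \<alpha>\<beta>(4) z'] abc K
      by (intro bexI[of _ "\<beta> * c / a"] bexI[of _ "\<alpha> - \<beta> * b / a"])
         (simp_all add: subfield_diff subfield_mult subfield_divide)
  qed
  then obtain \<alpha> \<beta> where \<alpha>\<beta>: "\<alpha> \<in> K" "\<beta> \<in> K"
    "z ^ CHAR('b) = \<alpha> + \<beta> * z" "z' ^ CHAR('b) = \<alpha> + \<beta> * z'"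
    by blast
  have "\<beta> \<noteq> 0"
  proof
    assume "\<beta> = 0"
    then have "z ^ CHAR('b) = z' ^ CHAR('b)" using \<alpha>\<beta> by simp
    with \<open>z \<noteq> z'\<close> show False using frobenius_inj[OF p] by blast
  qed
  then have "z = (z ^ CHAR('b) - \<alpha>) / \<beta>" using \<alpha>\<beta>(3) by (simp add: field_simps)
  also have "\<dots> \<in> K" using K zp \<alpha>\<beta>(1,2) by (intro subfield_divide subfield_diff)
  finally show ?thesis .
qed

lemma subfield_eq_UNIV_if_contains_variable:
  fixes K :: "'a::field poly fract set"
  assumes K: "is_subfield K" and const: "\<And>a. to_fract [:a:] \<in> K" and t: "to_fract [:0, 1:] \<in> K"
  shows "K = UNIV"
proof -
  have poly: "to_fract q \<in> K" for q :: "'a poly"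
  proof (induction q)
    case 0
    show ?case using K by (simp add: subfield_0)
  next
    case (pCons c q)
    have "to_fract (pCons c q) = to_fract [:c:] + to_fract [:0, 1:] * to_fract q"
      by (simp flip: to_fract_add to_fract_mult)
    with pCons.IH show ?case by (simp add: subfield_add[OF K] subfield_mult[OF K] const t)
  qed
  have "x \<in> K" for x
    by (cases x) (simp add: Fract_conv_to_fract subfield_divide[OF K] poly)
  then show ?thesis by blast
qed

text \<open>\<open>(X, Y) = (\<gamma>/t - t\<^sup>p\<^sup>+\<^sup>1, t\<^sup>p)\<close> parametrises the fibre \<open>F = \<gamma>\<^sup>p\<close>.\<close>

definition param_X :: "'a::field \<Rightarrow> nat \<Rightarrow> 'a poly fract" where
  "param_X \<gamma> p = to_fract [:\<gamma>:] / to_fract [:0, 1:] - to_fract [:0, 1:] ^ (p + 1)"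

definition param_Y :: "nat \<Rightarrow> 'a::field poly fract" where
  "param_Y p = to_fract [:0, 1:] ^ p"

lemma F_minus_polyC:
  fixes F :: "'a::field poly poly"
  assumes F: "F = (polyX ^ p + polyY ^ (p + 1)) * polyY"
  shows "F - polyC c = monom 1 (p + 2) + [:- [:c:], [:0, 1:] ^ p:]"
proof -
  have "[:a:] ^ n = [:a ^ n:]" for a :: "'a poly" and n by (induction n) simp_all
  then have "F = [:0, [:0, 1:] ^ p:] + polyY ^ (p + 2)"
    unfolding F by (simp add: polyX_def polyY_def algebra_simps)
  then show ?thesis by (simp add: polyC_def polyY_def monom_altdef)
qed

lemma eval2_param_F:
  fixes F :: "'a::field poly poly"
  assumes p: "CHAR('a) = p" "p > 0" and \<gamma>: "\<gamma> ^ p = c"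
    and F: "F = (polyX ^ p + polyY ^ (p + 1)) * polyY"
  shows "eval2 (\<lambda>a. to_fract [:a:]) (F - polyC c) (param_X \<gamma> p) (param_Y p) = 0"
proof -
  define t :: "'a poly fract" where "t = to_fract [:0, 1:]"
  have t: "t \<noteq> 0" by (simp add: t_def)
  note \<kappa> = is_ring_hom_to_fract_const[where 'a='a]
  have "prime CHAR('a poly fract)" using prime_CHAR_semidom[where 'a='a] p by simp
  then have "param_X \<gamma> p ^ p = to_fract [:\<gamma>:] ^ p / t ^ p - (t ^ (p + 1)) ^ p"
    using freshmans_dream_diff[of "to_fract [:\<gamma>:] / t" "t ^ (p + 1)"] p
    by (simp add: param_X_def t_def power_divide)
  also have "to_fract [:\<gamma>:] ^ p = to_fract [:c:]"
    using \<gamma> ring_hom_power[OF \<kappa>, of \<gamma> p] by simp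
  finally have X: "param_X \<gamma> p ^ p = to_fract [:c:] / t ^ p - (t ^ (p + 1)) ^ p" .
  show ?thesis
    unfolding F using t
    by (simp add: ring_hom_simps[OF is_ring_hom_eval2[OF \<kappa>]] eval2_polyC[OF \<kappa>] eval2_polyX[OF \<kappa>]
        eval2_polyY[OF \<kappa>] X param_Y_def t_def[symmetric] power_mult[symmetric] field_simps)
qed

lemma eval2_param_low_degree:
  fixes r :: "'a::alg_closed_field poly poly"
  assumes p: "CHAR('a) = p" "p > 0" and "\<gamma> \<noteq> 0" and deg: "degree r < p + 2"
    and r: "eval2 (\<lambda>a. to_fract [:a:]) r (param_X \<gamma> p) (param_Y p) = 0"
  shows "r = 0"
proof (rule eq_0_if_vanishes_on_curve[OF p \<open>\<gamma> \<noteq> 0\<close> deg])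
  fix \<tau> :: 'a assume "\<tau> \<noteq> 0"
  define T :: "'a poly" where "T = [:0, 1:]"
  have "to_fract T \<noteq> 0" by (simp add: T_def)
  then have "param_X \<gamma> p = to_fract ([:\<gamma>:] - T ^ (p + 2)) / to_fract T"
    "param_Y p = to_fract (T ^ (p + 1)) / to_fract T"
    unfolding param_X_def param_Y_def T_def[symmetric] to_fract_diff to_fract_power
    by (simp_all add: field_simps power_add)
  then obtain N \<Psi> where
    "to_fract \<Psi> = eval2 (\<lambda>a. to_fract [:a:]) r (param_X \<gamma> p) (param_Y p) * to_fract T ^ N"
    "\<forall>\<tau>. poly T \<tau> \<noteq> 0 \<longrightarrow> poly \<Psi> \<tau> = poly T \<tau> ^ N
       * eval2 (\<lambda>a. a) r (poly ([:\<gamma>:] - T ^ (p + 2)) \<tau> / poly T \<tau>)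
           (poly (T ^ (p + 1)) \<tau> / poly T \<tau>)"
    using clear_denominators_eval2[of T r "[:\<gamma>:] - T ^ (p + 2)" "T ^ (p + 1)"] by (auto simp: T_def)
  with r \<open>\<tau> \<noteq> 0\<close> show "eval2 (\<lambda>a. a) r ((\<gamma> - \<tau> ^ (p + 2)) / \<tau>) (\<tau> ^ p) = 0"
    by (simp add: T_def)
qed

text \<open>
  \<open>t\<close> and \<open>-\<gamma>/t\<^sup>p\<^sup>+\<^sup>1\<close> are the two roots of \<open>Y Z\<^sup>2 + X Z = \<gamma>\<close>, and \<open>t\<^sup>p = Y\<close>.
\<close>
lemma param_generates:
  fixes \<gamma> :: "'a::field"
  assumes p: "CHAR('a) = p" "p > 0" and "\<gamma> \<noteq> 0"
  shows "gen_field (\<lambda>a. to_fract [:a:]) {param_X \<gamma> p, param_Y p} = UNIV"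
proof (rule subfield_eq_UNIV_if_contains_variable)
  define K where "K = gen_field (\<lambda>a. to_fract [:a:]) {param_X \<gamma> p, param_Y p :: 'a poly fract}"
  define t :: "'a poly fract" where "t = to_fract [:0, 1:]"
  define t' where "t' = - to_fract [:\<gamma>:] / t ^ (p + 1)"
  have t: "t \<noteq> 0" by (simp add: t_def)
  show K: "is_subfield K" unfolding K_def by (rule gen_field_subfield)
  show const: "to_fract [:a:] \<in> K" for a unfolding K_def by (rule gen_field_emb)
  have XY: "param_X \<gamma> p \<in> K" "param_Y p \<in> K" unfolding K_def by (simp_all add: gen_field_gen)
  have tt': "t \<noteq> t'"
  proof
    assume "t = t'"
    then have "t ^ (p + 2) + to_fract [:\<gamma>:] = 0"
      using t by (simp add: t'_def field_simps power_add power2_eq_square)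
    also have "t ^ (p + 2) + to_fract [:\<gamma>:] = to_fract ([:0, 1:] ^ (p + 2) + [:\<gamma>:])"
      by (simp only: to_fract_add to_fract_power t_def)
    finally have "coeff ([:0, 1:] ^ (p + 2) + [:\<gamma>:]) (p + 2) = 0" by simp
    then show False by (simp add: coeff_linear_power)
  qed
  have roots: "param_Y p * t ^ 2 + param_X \<gamma> p * t = to_fract [:\<gamma>:]"
    "param_Y p * t' ^ 2 + param_X \<gamma> p * t' = to_fract [:\<gamma>:]"
    using t by (simp_all add: param_X_def param_Y_def t_def[symmetric] t'_def field_simps
        power2_eq_square power_add)
  have "prime CHAR('a poly fract)" using prime_CHAR_semidom[where 'a='a] p by simp
  moreover have "t ^ CHAR('a poly fract) \<in> K" using XY p by (simp add: param_Y_def t_def)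
  moreover have "param_Y p \<noteq> 0" using t by (simp add: param_Y_def t_def)
  ultimately have "t \<in> K"
    using root_in_subfield_if_conjugate[OF K XY(2) XY(1) const _ roots tt'] by blast
  then show "to_fract [:0, 1:] \<in> K" by (simp add: t_def)
qed

lemma rational_fibre:
  fixes F :: "'a::alg_closed_field poly poly"
  assumes p: "CHAR('a) = p" "p > 0" and F: "F = (polyX ^ p + polyY ^ (p + 1)) * polyY"
    and "c \<noteq> 0"
  shows "irreducible (F - polyC c) \<and> rational_quotient (F - polyC c)"
proof -
  obtain \<gamma> where \<gamma>: "\<gamma> ^ p = c" using nth_root_exists[OF p(2)] by blast
  have "\<gamma> \<noteq> 0" using \<gamma> \<open>c \<noteq> 0\<close> p(2) by auto
  define ev where "ev P = eval2 (\<lambda>a. to_fract [:a:]) P (param_X \<gamma> p) (param_Y p)" for P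
  have ev: "is_ring_hom ev"
    unfolding ev_def[abs_def] by (rule is_ring_hom_eval2[OF is_ring_hom_to_fract_const])
  have \<Phi>: "degree (F - polyC c) = p + 2" "lead_coeff (F - polyC c) = 1"
    unfolding F_minus_polyC[OF F] by (subst degree_add_eq_left; simp add: degree_monom_eq)+
  have ker: "ev P = 0 \<longleftrightarrow> F - polyC c dvd P" for P
  proof (rule kernel_eq_multiples_of_monic[OF ev \<Phi>(2)])
    show "ev (F - polyC c) = 0" unfolding ev_def by (rule eval2_param_F[OF p \<gamma> F])
    show "r = 0" if "degree r < degree (F - polyC c)" "ev r = 0" for r
      using that eval2_param_low_degree[OF p \<open>\<gamma> \<noteq> 0\<close>] \<Phi>(1) by (simp add: ev_def)
  qed
  have "irreducible (F - polyC c)"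
  proof (rule irreducible_if_kernel_eq_multiples[OF ev ker])
    show "F - polyC c \<noteq> 0" "\<not> is_unit (F - polyC c)"
      using \<Phi>(1) by (auto simp: is_unit_poly_iff)
  qed
  moreover have "rational_quotient (F - polyC c)"
    unfolding rational_quotient_def eval_kt_eq_eval2
    using ker param_generates[OF p \<open>\<gamma> \<noteq> 0\<close>] by (auto simp: ev_def)
  ultimately show ?thesis ..
qed

lemma generally_rational_F:
  fixes F :: "'a::alg_closed_field poly poly"
  assumes p: "CHAR('a) = p" "p > 0" and F: "F = (polyX ^ p + polyY ^ (p + 1)) * polyY"
  shows "generally_rational F"
proof -
  have "{c::'a. \<not> (irreducible (F - polyC c) \<and> rational_quotient (F - polyC c))} \<subseteq> {0}"
    using rational_fibre[OF p F] by blast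
  then show ?thesis unfolding generally_rational_def by (rule finite_subset) simp
qed

theorem mainTheorem12:
  fixes p :: nat and F :: "'a::alg_closed_field poly poly"
  assumes "CHAR('a) = p" and "p > 0"
    and "F = (polyX ^ p + polyY ^ (p + 1)) * polyY"
  shows "kFrac {to_fract F, to_fract polyY} = kFrac {to_fract (polyX ^ p), to_fract polyY}
       \<and> good_pseudo_field_generator p F
       \<and> generally_rational F
       \<and> \<not> field_generator F"
  using kFrac_F_Y_eq[OF assms(3)] good_pseudo_field_generator_F[OF assms]
    generally_rational_F[OF assms] not_field_generator_F[OF assms]
  by blast

end
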